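(* Under the standing parameter and boundedness assumptions (A1)–(A3) below, there exists $C>0$ such that the extended iterates $(X')^k$ of the 3-splitting proximal point ADMM satisfy $$\mathcal{L}((X')^k)\le\mathcal{L}((X')^{k-1})-C\|(X')^k-(X')^{k-1}\|_F^2\quad\text{for all }k\ge2.$$
   Context: Data $X\in\mathbb{R}^{d\times n}$, $Y\in\mathbb{R}^{q\times n}$, $N\ge3$, $\lambda,\mu>0$, $\beta_1,\dots,\beta_N>0$. Activations $\sigma_i$ ($i\le N-1$) real analytic with $|\sigma_i|\le\psi_0,|\sigma_i'|\le\psi_1,|\sigma_i''|\le\psi_2$ on $\mathbb{R}$ ($\psi_j>0$), applied entrywise. $\|\cdot\|_F$ Frobenius norm, $\langle A,B\rangle=\mathrm{tr}(AB^T)$, $V_0:=X$. Variables $W_i\in\mathbb{R}^{d\times d}$, $U_i,V_i,\Lambda_i\in\mathbb{R}^{d\times n}$ ($i\le N-1$), $W_N\in\mathbb{R}^{q\times d}$, $V_N,\Lambda_N\in\mathbb{R}^{q\times n}$. $\mathcal{L}_\beta^{3s}=\tfrac12\|V_N-Y\|_F^2+\tfrac\lambda2\sum_{i=1}^N\|W_i\|_F^2+\tfrac\mu2\sum_{i=1}^{N-1}\|V_{i-1}+\sigma_i(U_i)-V_i\|_F^2+\sum_{i=1}^{N-1}(\langle\Lambda_i,W_iV_{i-1}-U_i\rangle+\tfrac{\beta_i}2\|W_iV_{i-1}-U_i\|_F^2)+\langle\Lambda_N,W_NV_{N-1}-V_N\rangle+\tfrac{\beta_N}2\|W_NV_{N-1}-V_N\|_F^2$.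 3-splitting proximal point ADMM: arbitrary $W_i^0$; $U_i^0=W_i^0V_{i-1}^0$, $V_i^0=V_{i-1}^0+\sigma_i(U_i^0)$ ($i\le N-1$), $V_N^0=W_N^0V_{N-1}^0$, $\Lambda_i^0=O$; positive parameters $\omega_i^k$. For $k\ge1$: (a) $W_i^k=\arg\min_{W_i}\{\tfrac\lambda2\|W_i\|_F^2+\tfrac{\beta_i}2\|W_iV_{i-1}^{k-1}-U_i^{k-1}+\Lambda_i^{k-1}/\beta_i\|_F^2\}$ ($i\le N-1$) and $W_N^k=\arg\min\{\tfrac\lambda2\|W_N\|_F^2+\tfrac{\beta_N}2\|W_NV_{N-1}^{k-1}-V_N^{k-1}+\Lambda_N^{k-1}/\beta_N\|_F^2\}$; (b) for $i=1,\dots,N-1$ in order: $U_i^k$ is a (fixed) minimizer of $\tfrac\mu2\|V_{i-1}^k+\sigma_i(U_i)-V_i^{k-1}\|_F^2+\tfrac{\beta_i}2\|U_i-W_i^kV_{i-1}^k-\Lambda_i^{k-1}/\beta_i\|_F^2+\tfrac{\omega_i^{k-1}}2\|U_i-U_i^{k-1}\|_F^2$; then, if $i\le N-2$, $V_i^k=\arg\min_{V_i}\{\tfrac\mu2\|V_{i-1}^k+\sigma_i(U_i^k)-V_i\|_F^2+\tfrac\mu2\|V_i+\sigma_{i+1}(U_{i+1}^{k-1})-V_{i+1}^{k-1}\|_F^2+\tfrac{\beta_{i+1}}2\|W_{i+1}^kV_i-U_{i+1}^{k-1}+\Lambda_{i+1}^{k-1}/\beta_{i+1}\|_F^2\}$,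 and if $i=N-1$, $V_{N-1}^k=\arg\min\{\tfrac\mu2\|V_{N-1}-V_{N-2}^k-\sigma_{N-1}(U_{N-1}^k)\|_F^2+\tfrac{\beta_N}2\|W_N^kV_{N-1}-V_N^{k-1}+\Lambda_N^{k-1}/\beta_N\|_F^2\}$; (c) $V_N^k=\frac1{1+\beta_N}(Y+\beta_NW_N^kV_{N-1}^k+\Lambda_N^{k-1})$; (d) $\Lambda_i^k=\Lambda_i^{k-1}+\beta_i(W_i^kV_{i-1}^k-U_i^k)$ ($i\le N-1$), $\Lambda_N^k=\Lambda_N^{k-1}+\beta_N(W_N^kV_{N-1}^k-V_N^k)$. Assumptions: fix $\mathcal{V}_0^{\max}>\|X\|_F$ and $\mathcal{V}_1^{\max},\dots,\mathcal{V}_{N-1}^{\max}>0$; let $a_i:=\psi_0\psi_2+\psi_1^2+\mathcal{V}_i^{\max}\psi_2+\mathcal{V}_{i-1}^{\max}\psi_2$. (A1) $\beta_i>\max\{32(1+\sqrt2)\mu a_i,\,16\mu\psi_1^2\}$ for $i\le N-1$, and $\beta_N>1$. (A2) With $\Delta_i:=(\beta_i/4-8\mu a_i)^2-128\mu^2a_i^2$, $\hat\epsilon_i\in(0,\sqrt{\Delta_i}/32)$, $\omega_i^{\min}:=\frac{\beta_i/4-8\mu a_i-\sqrt{\Delta_i}}{16}+\hat\epsilon_i$, $\epsilon_i\in(0,\omega_i^{\min}/4)$, $\omega_i^{\max}:=\min\{\frac{\beta_i/4-8\mu a_i+\sqrt{\Delta_i}}{16}-\hat\epsilon_i,\ \sqrt{(\omega_i^{\min})^2+\beta_i\omega_i^{\min}/16-\beta_i\epsilon_i/4}\}$,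 the parameters satisfy $\omega_i^{\min}<\omega_i^k\le\omega_i^{k+1}<\omega_i^{\max}$ for all $k\ge0$, $i\le N-1$. (A3) The generated iterates satisfy $\|V_i^k\|_F\le\mathcal{V}_i^{\max}$ for all $i\le N-1$, $k\ge0$. Auxiliary function: for $X=(\{W_i\},\{U_i\},\{V_i\},\{\Lambda_i\})$ and extra blocks $U_i',V_i'\in\mathbb{R}^{d\times n}$ ($i\le N-1$), $X'=(X,\{U_i'\},\{V_i'\})$ and $\mathcal{L}(X'):=\mathcal{L}_\beta^{3s}(X)+\sum_{i=1}^{N-1}\theta_i\|U_i-U_i'\|_F^2+\sum_{i=1}^{N-1}\eta_i\|V_i-V_i'\|_F^2$, with $\theta_i:=4(\omega_i^{\min})^2/\beta_i+\omega_i^{\min}/4$, $\eta_i:=4\mu^2\psi_1^2/\beta_i+\mu/4$. Extended iterates: $(X')^k:=(X^k,\{U_i^{k-1}\},\{V_i^{k-1}\})$ for $k\ge1$, where $X^k$ collects all blocks at iteration $k$; norms are Frobenius norms of the concatenated blocks. *)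

theory Defs
  imports "HOL-Analysis.Analysis"
begin

text \<open>Matrices in R^{m x n} are rendered as real^'n^'m (rows indexed by 'm).
  The HOL-Analysis norm on this type is the Frobenius norm and the inner
  product A \<bullet> B is tr(A B^T).\<close>

definition ent :: "(real \<Rightarrow> real) \<Rightarrow> real^'n^'m \<Rightarrow> real^'n^'m" where
  "ent f A = (\<chi> i j. f (A $ i $ j))"

definition real_analytic :: "(real \<Rightarrow> real) \<Rightarrow> bool" where
  "real_analytic f \<longleftrightarrow> (\<forall>x. \<exists>r>0. \<exists>c::nat \<Rightarrow> real.
      \<forall>y. \<bar>y - x\<bar> < r \<longrightarrow> (\<lambda>k. c k * (y - x) ^ k) sums f y)"

text \<open>The augmented Lagrangian L_beta^{3s}. The block V 0 plays the role of V_0 = X.\<close>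
definition L3s ::
  "nat \<Rightarrow> real^'n^'q \<Rightarrow> real \<Rightarrow> real \<Rightarrow> (nat \<Rightarrow> real) \<Rightarrow> (nat \<Rightarrow> real \<Rightarrow> real)
   \<Rightarrow> (nat \<Rightarrow> real^'d^'d) \<Rightarrow> real^'d^'q
   \<Rightarrow> (nat \<Rightarrow> real^'n^'d) \<Rightarrow> (nat \<Rightarrow> real^'n^'d) \<Rightarrow> real^'n^'q
   \<Rightarrow> (nat \<Rightarrow> real^'n^'d) \<Rightarrow> real^'n^'q \<Rightarrow> real" where
  "L3s N Y lam mu beta act W WN U V VN Lam LamN =
     1/2 * (norm (VN - Y))^2
   + lam/2 * ((\<Sum>i=1..N-1. (norm (W i))^2) + (norm WN)^2)
   + mu/2 * (\<Sum>i=1..N-1. (norm (V (i-1) + ent (act i) (U i) - V i))^2)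
   + (\<Sum>i=1..N-1. Lam i \<bullet> (W i ** V (i-1) - U i)
        + beta i / 2 * (norm (W i ** V (i-1) - U i))^2)
   + LamN \<bullet> (WN ** V (N-1) - VN) + beta N / 2 * (norm (WN ** V (N-1) - VN))^2"

definition Lext ::
  "nat \<Rightarrow> real^'n^'q \<Rightarrow> real \<Rightarrow> real \<Rightarrow> (nat \<Rightarrow> real) \<Rightarrow> (nat \<Rightarrow> real \<Rightarrow> real)
   \<Rightarrow> (nat \<Rightarrow> real) \<Rightarrow> (nat \<Rightarrow> real)
   \<Rightarrow> (nat \<Rightarrow> real^'d^'d) \<Rightarrow> real^'d^'q
   \<Rightarrow> (nat \<Rightarrow> real^'n^'d) \<Rightarrow> (nat \<Rightarrow> real^'n^'d) \<Rightarrow> real^'n^'q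
   \<Rightarrow> (nat \<Rightarrow> real^'n^'d) \<Rightarrow> real^'n^'q
   \<Rightarrow> (nat \<Rightarrow> real^'n^'d) \<Rightarrow> (nat \<Rightarrow> real^'n^'d) \<Rightarrow> real" where
  "Lext N Y lam mu beta act theta eta W WN U V VN Lam LamN U' V' =
     L3s N Y lam mu beta act W WN U V VN Lam LamN
   + (\<Sum>i=1..N-1. theta i * (norm (U i - U' i))^2)
   + (\<Sum>i=1..N-1. eta i * (norm (V i - V' i))^2)"

definition a_par :: "real \<Rightarrow> real \<Rightarrow> real \<Rightarrow> (nat \<Rightarrow> real) \<Rightarrow> nat \<Rightarrow> real" where
  "a_par psi0 psi1 psi2 Vmax i =
     psi0 * psi2 + psi1^2 + Vmax i * psi2 + Vmax (i-1) * psi2"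

definition Delta_par :: "real \<Rightarrow> real \<Rightarrow> real \<Rightarrow> real" where
  "Delta_par beta_i mu a_i = (beta_i/4 - 8*mu*a_i)^2 - 128*mu^2*a_i^2"

definition omega_min :: "real \<Rightarrow> real \<Rightarrow> real \<Rightarrow> real \<Rightarrow> real" where
  "omega_min beta_i mu a_i heps_i =
     (beta_i/4 - 8*mu*a_i - sqrt (Delta_par beta_i mu a_i))/16 + heps_i"

definition omega_max :: "real \<Rightarrow> real \<Rightarrow> real \<Rightarrow> real \<Rightarrow> real \<Rightarrow> real" where
  "omega_max beta_i mu a_i heps_i eps_i =
     min ((beta_i/4 - 8*mu*a_i + sqrt (Delta_par beta_i mu a_i))/16 - heps_i)
         (sqrt ((omega_min beta_i mu a_i heps_i)^2
                + beta_i * omega_min beta_i mu a_i heps_i / 16 - beta_i * eps_i / 4))"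

end

theory Submission
  imports Defs
begin

text \<open>
  Every block update of a sweep decreases the augmented Lagrangian by a multiple of its squared step:
  the \<open>W\<close>-, \<open>V\<close>- and \<open>V\<^sub>N\<close>-subproblems are strongly convex in the updated block, and the proximal
  \<open>U\<close>-update is simply compared with the previous iterate.  Only the multiplier updates increase it,
  by \<open>\<parallel>\<Delta>\<Lambda>\<^sub>i\<parallel>\<^sup>2/\<beta>\<^sub>i\<close>.  The first-order condition of the \<open>U\<close>-subproblem expresses \<open>\<Lambda>\<^sub>i\<^sup>k\<close> through
  \<open>U\<^sub>i\<^sup>k\<close>, \<open>V\<^sub>i\<^sub>-\<^sub>1\<^sup>k\<close>, \<open>V\<^sub>i\<^sup>k\<^sup>-\<^sup>1\<close> and the proximal term; the bounds on \<open>\<sigma>\<^sub>i, \<sigma>\<^sub>i', \<sigma>\<^sub>i''\<close> and (A3) make this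
  expression Lipschitz, so \<open>\<parallel>\<Delta>\<Lambda>\<^sub>i\<parallel>\<^sup>2\<close> is bounded by the \<open>U\<close>- and \<open>V\<close>-steps of iterations \<open>k\<close> and
  \<open>k - 1\<close>, while \<open>\<Lambda>\<^sub>N\<^sup>k = V\<^sub>N\<^sup>k - Y\<close>.  The extra terms \<open>\<theta>\<^sub>i \<parallel>U\<^sub>i - U\<^sub>i'\<parallel>\<^sup>2 + \<eta>\<^sub>i \<parallel>V\<^sub>i - V\<^sub>i'\<parallel>\<^sup>2\<close> of the
  auxiliary function absorb the steps of iteration \<open>k - 1\<close>, and (A1)-(A2) are exactly what makes all
  resulting coefficients negative.  Since the multiplier steps are in turn bounded by the primal steps,
  the decrease controls the full squared step.
\<close>

section \<open>Activations\<close>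

lemma power_series_has_real_derivative:
  fixes c :: "nat \<Rightarrow> real"
  assumes r: "r > 0" and f: "\<And>y. \<bar>y - x\<bar> < r \<Longrightarrow> (\<lambda>n. c n * (y - x)^n) sums f y"
    and y: "\<bar>y - x\<bar> < r"
  shows "(f has_real_derivative (\<Sum>n. diffs c n * (y - x)^n)) (at y)"
    and "(\<lambda>n. diffs c n * (y - x)^n) sums (\<Sum>n. diffs c n * (y - x)^n)"
proof -
  have smz: "summable (\<lambda>n. c n * z^n)" if "norm z < r" for z :: real
    using f[of "z + x"] that by (auto simp: sums_iff)
  have "((\<lambda>z. \<Sum>n. c n * z^n) has_real_derivative (\<Sum>n. diffs c n * (y - x)^n)) (at (y - x))"
    by (rule termdiffs_strong'[of r]) (use smz y in auto)
  then have "((\<lambda>t. \<Sum>n. c n * (t - x)^n) has_real_derivative (\<Sum>n. diffs c n * (y - x)^n)) (at y)"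
    using DERIV_shift[of "\<lambda>z. \<Sum>n. c n * z^n" _ y "-x"] by simp
  then show "(f has_real_derivative (\<Sum>n. diffs c n * (y - x)^n)) (at y)"
  proof (rule has_field_derivative_transform_within_open)
    show "open (ball x r)" "y \<in> ball x r"
      using y by (simp_all add: dist_real_def abs_minus_commute)
    show "(\<Sum>n. c n * (t - x)^n) = f t" if "t \<in> ball x r" for t
      using f[of t] that by (simp add: sums_iff dist_real_def abs_minus_commute)
  qed
  show "(\<lambda>n. diffs c n * (y - x)^n) sums (\<Sum>n. diffs c n * (y - x)^n)"
    using termdiff_converges[of "y - x" r c] smz y by (simp add: summable_sums)
qed

lemma real_analytic_has_real_derivative:
  assumes "real_analytic f"
  shows "(f has_real_derivative deriv f x) (at x)"
proof -
  obtain r c where "r > 0" "\<And>y. \<bar>y - x\<bar> < r \<Longrightarrow> (\<lambda>n. c n * (y - x)^n) sums f y"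
    using assms unfolding real_analytic_def by blast
  from power_series_has_real_derivative(1)[OF this, of x] \<open>r > 0\<close> show ?thesis
    using DERIV_imp_deriv by fastforce
qed

lemma real_analytic_deriv:
  assumes "real_analytic f"
  shows "real_analytic (deriv f)"
  unfolding real_analytic_def
proof
  fix x
  obtain r c where r: "r > 0" and f: "\<And>y. \<bar>y - x\<bar> < r \<Longrightarrow> (\<lambda>n. c n * (y - x)^n) sums f y"
    using assms unfolding real_analytic_def by blast
  have "(\<lambda>n. diffs c n * (y - x)^n) sums deriv f y" if "\<bar>y - x\<bar> < r" for y
    using power_series_has_real_derivative[OF r f that] DERIV_imp_deriv by metis
  with r show "\<exists>r>0. \<exists>c. \<forall>y. \<bar>y - x\<bar> < r \<longrightarrow> (\<lambda>n. c n * (y - x)^n) sums deriv f y"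
    by blast
qed

lemma residual_gradient_lipschitz:
  fixes s :: "real \<Rightarrow> real"
  assumes d1: "\<And>x. (s has_real_derivative deriv s x) (at x)"
    and d2: "\<And>x. (deriv s has_real_derivative deriv (deriv s) x) (at x)"
    and b0: "\<And>x. \<bar>s x\<bar> \<le> p0" and b1: "\<And>x. \<bar>deriv s x\<bar> \<le> p1"
    and b2: "\<And>x. \<bar>deriv (deriv s) x\<bar> \<le> p2"
    and x: "\<bar>x\<bar> \<le> Mx" and y: "\<bar>y\<bar> \<le> My"
  shows "\<bar>deriv s u * (x + s u - y) - deriv s u' * (x' + s u' - y')\<bar>
     \<le> (p0 * p2 + p1^2 + My * p2 + Mx * p2) * \<bar>u - u'\<bar> + p1 * \<bar>x - x'\<bar> + p1 * \<bar>y - y'\<bar>"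
proof -
  have lip: "\<bar>g u - g u'\<bar> \<le> M * \<bar>u - u'\<bar>"
    if "\<And>x. (g has_real_derivative g' x) (at x)" "\<And>x. \<bar>g' x\<bar> \<le> M" for g g' M
    using field_differentiable_bound[of UNIV g g' M u u'] that
    by (simp add: has_field_derivative_at_within)
  have l1: "\<bar>s u - s u'\<bar> \<le> p1 * \<bar>u - u'\<bar>" by (rule lip[OF d1 b1])
  have l2: "\<bar>deriv s u - deriv s u'\<bar> \<le> p2 * \<bar>u - u'\<bar>" by (rule lip[OF d2 b2])
  have p1: "p1 \<ge> 0" and p2: "p2 \<ge> 0" using b1[of 0] b2[of 0] by linarith+
  have eq: "deriv s u * (x + s u - y) - deriv s u' * (x' + s u' - y')
      = (deriv s u - deriv s u') * (x + s u - y) + deriv s u' * ((x - x') + (s u - s u') - (y - y'))"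
    by (simp add: algebra_simps)
  have "\<bar>(deriv s u - deriv s u') * (x + s u - y)\<bar> \<le> (p2 * \<bar>u - u'\<bar>) * (Mx + p0 + My)"
  proof -
    have "\<bar>x + s u - y\<bar> \<le> Mx + p0 + My" using x y b0[of u] by linarith
    then show ?thesis unfolding abs_mult using l2 p2 by (intro mult_mono) auto
  qed
  moreover have "\<bar>deriv s u' * ((x - x') + (s u - s u') - (y - y'))\<bar>
      \<le> p1 * (\<bar>x - x'\<bar> + p1 * \<bar>u - u'\<bar> + \<bar>y - y'\<bar>)"
  proof -
    have "\<bar>(x - x') + (s u - s u') - (y - y')\<bar> \<le> \<bar>x - x'\<bar> + p1 * \<bar>u - u'\<bar> + \<bar>y - y'\<bar>"
      using l1 by linarith
    then show ?thesis unfolding abs_mult using b1[of u'] p1 by (intro mult_mono) auto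
  qed
  ultimately have "\<bar>deriv s u * (x + s u - y) - deriv s u' * (x' + s u' - y')\<bar>
      \<le> (p2 * \<bar>u - u'\<bar>) * (Mx + p0 + My) + p1 * (\<bar>x - x'\<bar> + p1 * \<bar>u - u'\<bar> + \<bar>y - y'\<bar>)"
    unfolding eq by (rule order_trans[OF abs_triangle_ineq add_mono])
  also have "\<dots> = (p0 * p2 + p1^2 + My * p2 + Mx * p2) * \<bar>u - u'\<bar> + p1 * \<bar>x - x'\<bar> + p1 * \<bar>y - y'\<bar>"
    by (simp add: algebra_simps power2_eq_square)
  finally show ?thesis .
qed

section \<open>Strongly convex quadratic subproblems\<close>

lemma linear_matrix_mult_left: "linear (\<lambda>B::real^'n^'m. A ** B)"
  by (rule linearI) (simp_all add: matrix_matrix_mult_def vec_eq_iff sum.distrib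
      sum_distrib_left algebra_simps)

lemma linear_matrix_mult_right: "linear (\<lambda>A::real^'m^'k. A ** B)"
  by (rule linearI) (simp_all add: matrix_matrix_mult_def vec_eq_iff sum.distrib
      sum_distrib_left algebra_simps)

definition strongly_convex :: "real \<Rightarrow> ('a::real_normed_vector \<Rightarrow> real) \<Rightarrow> bool" where
  "strongly_convex m f \<longleftrightarrow> (\<forall>x y t. 0 \<le> t \<longrightarrow> t \<le> 1 \<longrightarrow>
     f ((1 - t) *\<^sub>R x + t *\<^sub>R y)
       \<le> (1 - t) * f x + t * f y - m/2 * t * (1 - t) * (norm (x - y))^2)"

lemma strongly_convex_add:
  assumes "strongly_convex m f" and "strongly_convex m' g"
  shows "strongly_convex (m + m') (\<lambda>z. f z + g z)"
  unfolding strongly_convex_def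
proof (intro allI impI)
  fix x y and t :: real
  assume "0 \<le> t" "t \<le> 1"
  then have "f ((1 - t) *\<^sub>R x + t *\<^sub>R y)
       \<le> (1 - t) * f x + t * f y - m/2 * t * (1 - t) * (norm (x - y))^2"
    "g ((1 - t) *\<^sub>R x + t *\<^sub>R y)
       \<le> (1 - t) * g x + t * g y - m'/2 * t * (1 - t) * (norm (x - y))^2"
    using assms unfolding strongly_convex_def by blast+
  then show "f ((1 - t) *\<^sub>R x + t *\<^sub>R y) + g ((1 - t) *\<^sub>R x + t *\<^sub>R y)
      \<le> (1 - t) * (f x + g x) + t * (f y + g y) - (m + m')/2 * t * (1 - t) * (norm (x - y))^2"
    by (simp add: algebra_simps add_divide_distrib)
qed

lemma norm_convex_combination_sq:
  fixes p q :: "'a::real_inner"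
  shows "(norm ((1 - t) *\<^sub>R p + t *\<^sub>R q))^2
    = (1 - t) * (norm p)^2 + t * (norm q)^2 - t * (1 - t) * (norm (p - q))^2"
  by (simp add: power2_norm_eq_inner inner_add_left inner_add_right inner_diff_left
      inner_diff_right inner_commute algebra_simps)

lemma strongly_convex_sq_norm_affine:
  fixes L :: "'a::real_inner \<Rightarrow> 'b::real_inner"
  assumes L: "linear L" and g: "\<And>z. g z = L z + b"
    and s: "\<And>d. s * (norm d)^2 \<le> (norm (L d))^2" and c: "c \<ge> 0"
  shows "strongly_convex (c * s) (\<lambda>z. c/2 * (norm (g z))^2)"
  unfolding strongly_convex_def
proof (intro allI impI)
  fix x y and t :: real
  assume t: "0 \<le> t" "t \<le> 1"
  have comb: "g ((1 - t) *\<^sub>R x + t *\<^sub>R y) = (1 - t) *\<^sub>R g x + t *\<^sub>R g y"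
    by (simp only: g linear_add[OF L] linear_scale[OF L]) (simp add: algebra_simps)
  have diff: "g x - g y = L (x - y)" by (simp add: g linear_diff[OF L])
  have "t * (1 - t) * (c * s * (norm (x - y))^2) \<le> t * (1 - t) * (c * (norm (g x - g y))^2)"
    unfolding diff using t c s[of "x - y"]
    by (intro mult_left_mono) (auto simp: mult.assoc intro: mult_left_mono)
  moreover have "c/2 * (norm (g ((1 - t) *\<^sub>R x + t *\<^sub>R y)))^2
      = (1 - t) * (c/2 * (norm (g x))^2) + t * (c/2 * (norm (g y))^2)
        - t * (1 - t) * (c * (norm (g x - g y))^2) / 2"
    unfolding comb norm_convex_combination_sq by (simp add: field_simps)
  moreover have "c * s/2 * t * (1 - t) * (norm (x - y))^2 = t * (1 - t) * (c * s * (norm (x - y))^2) / 2"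
    by simp
  ultimately show "c/2 * (norm (g ((1 - t) *\<^sub>R x + t *\<^sub>R y)))^2
      \<le> (1 - t) * (c/2 * (norm (g x))^2) + t * (c/2 * (norm (g y))^2)
        - c * s/2 * t * (1 - t) * (norm (x - y))^2"
    by linarith
qed

corollary strongly_convex_sq_dist:
  fixes p :: "'a::real_inner"
  assumes "c \<ge> 0"
  shows "strongly_convex c (\<lambda>z. c/2 * (norm (z - p))^2)"
  using strongly_convex_sq_norm_affine[of "\<lambda>z. z" "\<lambda>z. z - p" "- p" 1 c] assms
  by (simp add: bounded_linear.linear[OF bounded_linear_ident])

corollary strongly_convex_sq_norm:
  fixes c :: real
  assumes "c \<ge> 0"
  shows "strongly_convex c (\<lambda>z::'a::real_inner. c/2 * (norm z)^2)"
  using strongly_convex_sq_dist[OF assms, of 0] by simp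

corollary convex_sq_norm_affine:
  fixes L :: "'a::real_inner \<Rightarrow> 'b::real_inner"
  assumes "linear L" and "\<And>z. g z = L z + b" and "c \<ge> 0"
  shows "strongly_convex 0 (\<lambda>z. c/2 * (norm (g z))^2)"
  using strongly_convex_sq_norm_affine[of L g b 0 c] assms by simp

lemma strongly_convex_minimizer_growth:
  assumes f: "strongly_convex m f" and m: "m \<ge> 0" and min: "\<And>z. f x0 \<le> f z"
  shows "m/2 * (norm (x - x0))^2 \<le> f x - f x0"
proof -
  define K where "K = m/2 * (norm (x - x0))^2"
  define E where "E = f x - f x0"
  have key: "K * (1 - t) \<le> E" if t: "0 < t" "t \<le> 1" for t
  proof -
    have "f x0 \<le> f ((1 - t) *\<^sub>R x0 + t *\<^sub>R x)" by (rule min)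
    also have "\<dots> \<le> (1 - t) * f x0 + t * f x - m/2 * t * (1 - t) * (norm (x0 - x))^2"
      using f t unfolding strongly_convex_def by auto
    finally have "t * (K * (1 - t)) \<le> t * E"
      by (simp add: K_def E_def norm_minus_commute algebra_simps)
    then show ?thesis using t by simp
  qed
  show ?thesis
  proof (rule ccontr)
    assume "\<not> ?thesis"
    then have EK: "E < K" by (simp add: K_def E_def)
    moreover have "0 \<le> E" using key[of 1] by simp
    ultimately have "0 < (K - E) / (2 * K)" "(K - E) / (2 * K) \<le> 1"
      by (auto simp: field_simps)
    from key[OF this] have "K \<le> E" using EK \<open>0 \<le> E\<close> by (simp add: field_simps)
    with EK show False by linarith
  qed
qed

definition penalty :: "real \<Rightarrow> 'a::real_inner \<Rightarrow> 'a \<Rightarrow> real" where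
  "penalty b L r = inner L r + b/2 * (norm r)^2"

lemma penalty_eq_shifted_sq:
  "b > 0 \<Longrightarrow> penalty b L r = b/2 * (norm (r + (1/b) *\<^sub>R L))^2 - (norm L)^2 / (2 * b)"
  unfolding penalty_def power2_norm_eq_inner
  by (simp add: inner_add_left inner_add_right inner_commute field_simps)

lemma penalty_diff_eq_shifted_sq:
  assumes "b > 0"
  shows "penalty b L (P - Z) = b/2 * (norm (Z - P - (1/b) *\<^sub>R L))^2 - (norm L)^2 / (2 * b)"
proof -
  have "norm (P - Z + (1/b) *\<^sub>R L) = norm (Z - P - (1/b) *\<^sub>R L)"
    using norm_minus_cancel[of "Z - P - (1/b) *\<^sub>R L"] by (simp add: algebra_simps)
  then show ?thesis using penalty_eq_shifted_sq[OF assms, of L "P - Z"] by simp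
qed

lemma penalty_multiplier_update:
  fixes r L L' :: "'a::real_inner"
  assumes "b \<noteq> 0" and "L' = L + b *\<^sub>R r"
  shows "penalty b L' r = penalty b L r + (norm (L' - L))^2 / b"
  using assms unfolding penalty_def power2_norm_eq_inner
  by (simp add: inner_add_left inner_add_right field_simps power2_eq_square)

lemma penalized_least_squares_identity:
  fixes Y P L Z Z0 :: "'a::real_inner"
  assumes "(1 + b) *\<^sub>R Z0 = Y + b *\<^sub>R P + L"
  shows "1/2 * (norm (Z - Y))^2 + penalty b L (P - Z) - (1/2 * (norm (Z0 - Y))^2 + penalty b L (P - Z0))
       = (1 + b)/2 * (norm (Z - Z0))^2"
proof -
  have "inner ((1 + b) *\<^sub>R Z0 - Y - b *\<^sub>R P - L) (Z - Z0) = 0" using assms by simp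
  then show ?thesis
    unfolding penalty_def power2_norm_eq_inner
    by (simp add: inner_add_left inner_add_right inner_diff_left inner_diff_right inner_commute
        field_simps)
qed

lemma norm_sq_matrix_entries: "(norm (A::real^'n^'m))^2 = (\<Sum>i\<in>UNIV. \<Sum>j\<in>UNIV. (A $ i $ j)^2)"
  unfolding power2_norm_eq_inner inner_vec_def by (simp add: power2_eq_square)

lemma abs_matrix_entry_le_norm: "\<bar>(A::real^'n^'m) $ i $ j\<bar> \<le> norm A"
proof -
  have "\<bar>A $ i $ j\<bar> \<le> norm (A $ i)" by (metis component_le_norm_cart real_norm_def)
  also have "\<dots> \<le> norm A" by (rule Finite_Cartesian_Product.norm_nth_le)
  finally show ?thesis .
qed

lemma norm_matrix_le_by_entries:
  fixes x :: "real^'n^'m"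
  assumes "\<And>i j. \<bar>x $ i $ j\<bar> \<le> y $ i $ j"
  shows "norm x \<le> norm y"
proof -
  have "(x $ i $ j)^2 \<le> (y $ i $ j)^2" for i j
    using assms[of i j] by (metis abs_ge_zero abs_le_square_iff order_trans power2_abs abs_of_nonneg)
  then have "(norm x)^2 \<le> (norm y)^2"
    unfolding norm_sq_matrix_entries by (intro sum_mono) auto
  then show ?thesis by (simp add: power_mono_iff)
qed

lemma norm_matrix_le_by_entries4:
  fixes x p q r s :: "real^'n^'m"
  assumes "\<And>i j. \<bar>x$i$j\<bar> \<le> \<alpha> * \<bar>p$i$j\<bar> + \<beta> * \<bar>q$i$j\<bar> + \<gamma> * \<bar>r$i$j\<bar> + \<delta> * \<bar>s$i$j\<bar>"
    and "\<alpha> \<ge> 0" "\<beta> \<ge> 0" "\<gamma> \<ge> 0" "\<delta> \<ge> 0"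
  shows "norm x \<le> \<alpha> * norm p + \<beta> * norm q + \<gamma> * norm r + \<delta> * norm s"
proof -
  define abs_mat :: "real^'n^'m \<Rightarrow> real^'n^'m" where "abs_mat A = (\<chi> i j. \<bar>A$i$j\<bar>)" for A
  have norm_abs_mat: "norm (abs_mat A) = norm A" for A
  proof -
    have "(norm (abs_mat A))^2 = (norm A)^2"
      unfolding norm_sq_matrix_entries abs_mat_def by simp
    then show ?thesis by (simp add: power2_eq_iff_nonneg)
  qed
  have "norm x \<le> norm (\<alpha> *\<^sub>R abs_mat p + \<beta> *\<^sub>R abs_mat q + \<gamma> *\<^sub>R abs_mat r + \<delta> *\<^sub>R abs_mat s)"
    by (rule norm_matrix_le_by_entries) (use assms in \<open>simp add: abs_mat_def\<close>)
  also have "\<dots> \<le> norm (\<alpha> *\<^sub>R abs_mat p) + norm (\<beta> *\<^sub>R abs_mat q) + norm (\<gamma> *\<^sub>R abs_mat r)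
      + norm (\<delta> *\<^sub>R abs_mat s)"
    by (meson add_mono norm_triangle_ineq order_trans order_refl)
  also have "\<dots> = \<alpha> * norm p + \<beta> * norm q + \<gamma> * norm r + \<delta> * norm s"
    using assms(2-5) by (simp add: norm_abs_mat)
  finally show ?thesis .
qed

lemma sq_sum4_le:
  fixes p q r s :: real
  shows "(p + q + r + s)^2 \<le> 4 * (p^2 + q^2 + r^2 + s^2)"
proof -
  have "4 * (p^2 + q^2 + r^2 + s^2) - (p + q + r + s)^2
      = (p - q)^2 + (p - r)^2 + (p - s)^2 + (q - r)^2 + (q - s)^2 + (r - s)^2"
    by algebra
  moreover have "(p - q)^2 + (p - r)^2 + (p - s)^2 + (q - r)^2 + (q - s)^2 + (r - s)^2 \<ge> 0" by simp
  ultimately show ?thesis by linarith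
qed

lemma prox_activation_stationary:
  fixes A B P U0 U :: "real^'n^'m"
  assumes min: "\<And>Z. mu/2 * (norm (A + ent s U - B))^2 + b/2 * (norm (U - P))^2 + w/2 * (norm (U - U0))^2
      \<le> mu/2 * (norm (A + ent s Z - B))^2 + b/2 * (norm (Z - P))^2 + w/2 * (norm (Z - U0))^2"
    and s: "\<And>x. (s has_real_derivative deriv s x) (at x)"
  shows "mu * deriv s (U$i$j) * (A$i$j + s (U$i$j) - B$i$j) + b * (U$i$j - P$i$j)
      + w * (U$i$j - U0$i$j) = 0"
proof -
  define \<phi> where "\<phi> i j z = mu/2 * (A$i$j + s z - B$i$j)^2 + b/2 * (z - P$i$j)^2 + w/2 * (z - U0$i$j)^2"
    for i j z
  have F: "mu/2 * (norm (A + ent s Z - B))^2 + b/2 * (norm (Z - P))^2 + w/2 * (norm (Z - U0))^2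
      = (\<Sum>i'\<in>UNIV. \<Sum>j'\<in>UNIV. \<phi> i' j' (Z$i'$j'))" for Z
    unfolding \<phi>_def norm_sq_matrix_entries by (simp add: ent_def sum.distrib sum_distrib_left)
  define Z where "Z z = (\<chi> i' j'. if i' = i \<and> j' = j then z else U$i'$j')" for z
  have diff: "(\<Sum>i'\<in>UNIV. \<Sum>j'\<in>UNIV. \<phi> i' j' (Z z$i'$j')) - (\<Sum>i'\<in>UNIV. \<Sum>j'\<in>UNIV. \<phi> i' j' (U$i'$j'))
      = \<phi> i j z - \<phi> i j (U$i$j)" for z
  proof -
    have "(\<Sum>i'\<in>UNIV. \<Sum>j'\<in>UNIV. \<phi> i' j' (Z z$i'$j')) - (\<Sum>i'\<in>UNIV. \<Sum>j'\<in>UNIV. \<phi> i' j' (U$i'$j'))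
        = (\<Sum>i'\<in>UNIV. \<Sum>j'\<in>UNIV. if i' = i \<and> j' = j then \<phi> i j z - \<phi> i j (U$i$j) else 0)"
      unfolding sum_subtractf[symmetric] by (intro sum.cong refl) (auto simp: Z_def)
    also have "\<dots> = (\<Sum>i'\<in>UNIV. if i' = i then \<phi> i j z - \<phi> i j (U$i$j) else 0)"
      by (intro sum.cong refl) (auto simp: sum.delta)
    finally show ?thesis by simp
  qed
  have "\<phi> i j (U$i$j) \<le> \<phi> i j z" for z
    using min[of "Z z"] diff[of z] unfolding F by linarith
  moreover have "(\<phi> i j has_real_derivative mu * deriv s (U$i$j) * (A$i$j + s (U$i$j) - B$i$j)
      + b * (U$i$j - P$i$j) + w * (U$i$j - U0$i$j)) (at (U$i$j))"
    unfolding \<phi>_def by (rule derivative_eq_intros s refl | simp)+ (simp add: field_simps)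
  ultimately show ?thesis
    by (intro DERIV_local_min[of _ _ _ 1]) auto
qed

text \<open>One Gauss-Seidel sweep over the layers: step \<open>i\<close> moves term \<open>i\<close> from \<open>t i\<close> to its final
  value \<open>n i\<close> and term \<open>i + 1\<close> from \<open>b (i + 1)\<close> to the intermediate value \<open>t (i + 1)\<close>.\<close>

lemma sweep_sum_le:
  fixes n t b c :: "nat \<Rightarrow> real"
  assumes step: "\<And>i. 1 \<le> i \<Longrightarrow> i < M \<Longrightarrow> n i + t (Suc i) + c i \<le> t i + b (Suc i)"
    and last: "n M + c M + e' \<le> t M + e"
    and first: "t 1 = b 1" and M: "1 \<le> M"
  shows "(\<Sum>i=1..M. n i) + (\<Sum>i=1..M. c i) + e' \<le> (\<Sum>i=1..M. b i) + e"
proof -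
  have "(\<Sum>i=1..m-1. n i + c i) + t m \<le> (\<Sum>i=1..m. b i)" if "1 \<le> m" "m \<le> M" for m
    using that
  proof (induction m rule: dec_induct)
    case base then show ?case using first by simp
  next
    case (step m)
    have "(\<Sum>i=1..Suc m - 1. n i + c i) = (\<Sum>i=1..m-1. n i + c i) + (n m + c m)"
      using step.hyps(1) by (cases m) (auto simp: add.commute)
    then show ?case using step.IH step.prems assms(1)[of m] step.hyps by simp
  qed
  from this[OF M order_refl] last M show ?thesis
    by (cases M) (simp_all add: sum.distrib)
qed

lemma sum_shift_pred:
  fixes w x :: "nat \<Rightarrow> real"
  assumes "x 0 = 0"
  shows "(\<Sum>i=1..M. w i * x (i-1)) = (\<Sum>i=1..M. if i < M then w (Suc i) * x i else 0)"
proof (induction M)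
  case (Suc M)
  have "(\<Sum>i=1..Suc M. if i < Suc M then w (Suc i) * x i else 0)
      = (\<Sum>i=1..M. if i < M then w (Suc i) * x i else 0) + (if 1 \<le> M then w (Suc M) * x M else 0)"
    by (cases M) (auto intro!: sum.cong)
  with Suc assms show ?case by (cases M) simp_all
qed simp

section \<open>The step-size window of (A2)\<close>

lemma Delta_par_sqrt_bounds:
  fixes b mu a :: real
  assumes mu: "mu > 0" and a: "a \<ge> 0" and b: "b > 32 * (1 + sqrt 2) * mu * a"
  shows "b > 0" and "0 \<le> sqrt (Delta_par b mu a)" and "sqrt (Delta_par b mu a) \<le> b/4 - 8 * mu * a"
    and "(sqrt (Delta_par b mu a))^2 = (b/4 - 8 * mu * a)^2 - 128 * mu^2 * a^2"
proof -
  define B where "B = b/4 - 8 * mu * a"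
  have "0 \<le> 32 * (1 + sqrt 2) * mu * a" using mu a by simp
  with b show "b > 0" by linarith
  have "8 * sqrt 2 * mu * a \<le> B" using b unfolding B_def by (simp add: algebra_simps)
  moreover have "0 \<le> 8 * sqrt 2 * mu * a" using mu a by simp
  ultimately have B0: "0 \<le> B" and "(8 * sqrt 2 * mu * a)^2 \<le> B^2"
    by (linarith, intro power_mono)
  moreover have "(8 * sqrt 2 * mu * a)^2 = 128 * mu^2 * a^2" by (simp add: power_mult_distrib)
  moreover have "Delta_par b mu a = B^2 - 128 * mu^2 * a^2" by (simp add: Delta_par_def B_def)
  ultimately have D0: "0 \<le> Delta_par b mu a" by linarith
  then show sq: "(sqrt (Delta_par b mu a))^2 = (b/4 - 8 * mu * a)^2 - 128 * mu^2 * a^2"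
    by (simp add: Delta_par_def)
  show "0 \<le> sqrt (Delta_par b mu a)" using D0 by simp
  have "(sqrt (Delta_par b mu a))^2 \<le> B^2" unfolding sq B_def by simp
  then show "sqrt (Delta_par b mu a) \<le> b/4 - 8 * mu * a"
    using B0 unfolding B_def by (meson power2_le_imp_le)
qed

lemma omega_min_pos:
  fixes b mu a h :: real
  assumes "mu > 0" "a \<ge> 0" "b > 32 * (1 + sqrt 2) * mu * a" and "h > 0"
  shows "omega_min b mu a h > 0"
proof -
  have "0 \<le> (b/4 - 8 * mu * a - sqrt (Delta_par b mu a)) / 16"
    using Delta_par_sqrt_bounds(3)[OF assms(1-3)] by simp
  with \<open>h > 0\<close> show ?thesis unfolding omega_min_def by linarith
qed

text \<open>With \<open>B = b/4 - 8 \<mu> a\<close>, the first coefficient below is at most \<open>(8 w\<^sup>2 - B w + 4 \<mu>\<^sup>2 a\<^sup>2) / b\<close>;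
  the roots \<open>(B \<plusminus> sqrt (Delta_par b \<mu> a)) / 16\<close> of that quadratic lie \<open>h\<close> below
  \<open>omega_min\<close> and at least \<open>h\<close> above \<open>omega_max\<close>.\<close>

lemma omega_window_new_coefficient:
  fixes b mu a h e w :: real
  defines "om0 \<equiv> omega_min b mu a h"
  assumes mu: "mu > 0" and a: "a \<ge> 0" and b: "b > 32 * (1 + sqrt 2) * mu * a" and h: "h > 0"
    and w: "om0 < w" "w < omega_max b mu a h e"
  shows "4 * om0^2 / b + om0 / 4 - w/2 + 4 * (mu * a + w)^2 / b \<le> - 8 * h^2 / b"
proof -
  define B where "B = b/4 - 8 * mu * a"
  define s where "s = sqrt (Delta_par b mu a)"
  note D = Delta_par_sqrt_bounds[OF mu a b, folded B_def s_def]
  have "h < w - (B - s)/16" using w(1) unfolding om0_def omega_min_def B_def s_def by simp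
  moreover have "h < (B + s)/16 - w" using w(2) unfolding omega_max_def B_def s_def by simp
  ultimately have "h * h \<le> (w - (B - s)/16) * ((B + s)/16 - w)"
    using h by (intro mult_mono) linarith+
  moreover have "8 * w^2 - B * w + 4 * mu^2 * a^2 = - 8 * ((w - (B - s)/16) * ((B + s)/16 - w))"
    using D(4) by (simp add: power2_eq_square field_simps)
  ultimately have p: "8 * w^2 - B * w + 4 * mu^2 * a^2 \<le> - 8 * h^2"
    by (simp add: power2_eq_square)
  have "om0^2 \<le> w^2" using w omega_min_pos[OF mu a b h] unfolding om0_def by (intro power_mono) auto
  then have "4 * om0^2 / b \<le> 4 * w^2 / b" using D(1) by (simp add: divide_right_mono)
  then have "4 * om0^2 / b + om0 / 4 \<le> 4 * w^2 / b + w / 4" using w by simp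
  moreover have "4 * w^2 / b + w/4 - w/2 + 4 * (mu * a + w)^2 / b
      = (8 * w^2 - B * w + 4 * mu^2 * a^2) / b"
    using D(1) by (simp add: B_def power2_eq_square field_simps)
  moreover have "(8 * w^2 - B * w + 4 * mu^2 * a^2) / b \<le> - 8 * h^2 / b"
    using divide_right_mono[OF p, of b] D(1) by simp
  ultimately show ?thesis by linarith
qed

lemma omega_window_old_coefficient:
  fixes b mu a h e w :: real
  defines "om0 \<equiv> omega_min b mu a h"
  assumes mu: "mu > 0" and a: "a \<ge> 0" and b: "b > 32 * (1 + sqrt 2) * mu * a" and h: "h > 0"
    and e: "e < om0 / 4" and w: "0 \<le> w" "w < omega_max b mu a h e"
  shows "4 * w^2 / b - (4 * om0^2 / b + om0 / 4) \<le> - e"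
proof -
  define R where "R = om0^2 + b * om0 / 16 - b * e / 4"
  have bp: "b > 0" by (rule Delta_par_sqrt_bounds(1)[OF mu a b])
  have "b * e \<le> b * (om0/4)" using e bp by (intro mult_left_mono) auto
  then have "b * e / 4 \<le> b * om0 / 16" by simp
  moreover have "om0^2 \<ge> 0" by simp
  ultimately have R0: "R \<ge> 0" unfolding R_def by linarith
  have "w < sqrt R" using w unfolding omega_max_def R_def om0_def by simp
  then have "w^2 < (sqrt R)^2" using w by (intro power_strict_mono) auto
  then have "w^2 < R" using R0 by simp
  then have "4 * w^2 / b \<le> 4 * R / b" using bp by (simp add: divide_right_mono)
  moreover have "4 * R / b = 4 * om0^2 / b + om0 / 4 - e" using bp by (simp add: R_def field_simps)
  ultimately show ?thesis by linarith
qed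

section \<open>Descent along the 3-splitting proximal ADMM\<close>

locale admm3s =
  fixes N :: nat
    and X :: "real^'n^'d" and Y :: "real^'n^'q"
    and lam mu psi0 psi1 psi2 :: real
    and beta :: "nat \<Rightarrow> real"
    and act :: "nat \<Rightarrow> real \<Rightarrow> real"
    and Vmax heps eps :: "nat \<Rightarrow> real"
    and omega :: "nat \<Rightarrow> nat \<Rightarrow> real"
    and W :: "nat \<Rightarrow> nat \<Rightarrow> real^'d^'d" and WN :: "nat \<Rightarrow> real^'d^'q"
    and U V Lam :: "nat \<Rightarrow> nat \<Rightarrow> real^'n^'d"
    and VN LamN :: "nat \<Rightarrow> real^'n^'q"
    and a omin omax theta eta :: "nat \<Rightarrow> real"
  assumes a_def: "a = (\<lambda>i. a_par psi0 psi1 psi2 Vmax i)"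
    and omin_def: "omin = (\<lambda>i. omega_min (beta i) mu (a i) (heps i))"
    and omax_def: "omax = (\<lambda>i. omega_max (beta i) mu (a i) (heps i) (eps i))"
    and theta_def: "theta = (\<lambda>i. 4 * (omin i)^2 / beta i + omin i / 4)"
    and eta_def: "eta = (\<lambda>i. 4 * mu^2 * psi1^2 / beta i + mu / 4)"
    and N3: "N \<ge> 3"
    and lam_pos: "lam > 0" and mu_pos: "mu > 0"
    and act_analytic: "\<And>i. i \<in> {1..N-1} \<Longrightarrow> real_analytic (act i)"
    and act_bound0: "\<And>i x. i \<in> {1..N-1} \<Longrightarrow> \<bar>act i x\<bar> \<le> psi0"
    and act_bound1: "\<And>i x. i \<in> {1..N-1} \<Longrightarrow> \<bar>deriv (act i) x\<bar> \<le> psi1"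
    and act_bound2: "\<And>i x. i \<in> {1..N-1} \<Longrightarrow> \<bar>deriv (deriv (act i)) x\<bar> \<le> psi2"
    and V0: "\<And>k. V k 0 = X"
    and updW: "\<And>k i Z. k \<ge> 1 \<Longrightarrow> i \<in> {1..N-1} \<Longrightarrow>
        lam/2 * (norm (W k i))^2
          + beta i/2 * (norm (W k i ** V (k-1) (i-1) - U (k-1) i + (1/beta i) *\<^sub>R Lam (k-1) i))^2
        \<le> lam/2 * (norm Z)^2
          + beta i/2 * (norm (Z ** V (k-1) (i-1) - U (k-1) i + (1/beta i) *\<^sub>R Lam (k-1) i))^2"
    and updWN: "\<And>k Z. k \<ge> 1 \<Longrightarrow>
        lam/2 * (norm (WN k))^2
          + beta N/2 * (norm (WN k ** V (k-1) (N-1) - VN (k-1) + (1/beta N) *\<^sub>R LamN (k-1)))^2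
        \<le> lam/2 * (norm Z)^2
          + beta N/2 * (norm (Z ** V (k-1) (N-1) - VN (k-1) + (1/beta N) *\<^sub>R LamN (k-1)))^2"
    and updU: "\<And>k i Z. k \<ge> 1 \<Longrightarrow> i \<in> {1..N-1} \<Longrightarrow>
        mu/2 * (norm (V k (i-1) + ent (act i) (U k i) - V (k-1) i))^2
          + beta i/2 * (norm (U k i - W k i ** V k (i-1) - (1/beta i) *\<^sub>R Lam (k-1) i))^2
          + omega (k-1) i/2 * (norm (U k i - U (k-1) i))^2
        \<le> mu/2 * (norm (V k (i-1) + ent (act i) Z - V (k-1) i))^2
          + beta i/2 * (norm (Z - W k i ** V k (i-1) - (1/beta i) *\<^sub>R Lam (k-1) i))^2
          + omega (k-1) i/2 * (norm (Z - U (k-1) i))^2"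
    and updV: "\<And>k i Z. k \<ge> 1 \<Longrightarrow> i \<in> {1..N-2} \<Longrightarrow>
        mu/2 * (norm (V k (i-1) + ent (act i) (U k i) - V k i))^2
          + mu/2 * (norm (V k i + ent (act (i+1)) (U (k-1) (i+1)) - V (k-1) (i+1)))^2
          + beta (i+1)/2 * (norm (W k (i+1) ** V k i - U (k-1) (i+1)
                                  + (1/beta (i+1)) *\<^sub>R Lam (k-1) (i+1)))^2
        \<le> mu/2 * (norm (V k (i-1) + ent (act i) (U k i) - Z))^2
          + mu/2 * (norm (Z + ent (act (i+1)) (U (k-1) (i+1)) - V (k-1) (i+1)))^2
          + beta (i+1)/2 * (norm (W k (i+1) ** Z - U (k-1) (i+1)
                                  + (1/beta (i+1)) *\<^sub>R Lam (k-1) (i+1)))^2"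
    and updVlast: "\<And>k Z. k \<ge> 1 \<Longrightarrow>
        mu/2 * (norm (V k (N-1) - V k (N-2) - ent (act (N-1)) (U k (N-1))))^2
          + beta N/2 * (norm (WN k ** V k (N-1) - VN (k-1) + (1/beta N) *\<^sub>R LamN (k-1)))^2
        \<le> mu/2 * (norm (Z - V k (N-2) - ent (act (N-1)) (U k (N-1))))^2
          + beta N/2 * (norm (WN k ** Z - VN (k-1) + (1/beta N) *\<^sub>R LamN (k-1)))^2"
    and updVN: "\<And>k. k \<ge> 1 \<Longrightarrow>
        VN k = (1/(1 + beta N)) *\<^sub>R (Y + beta N *\<^sub>R (WN k ** V k (N-1)) + LamN (k-1))"
    and updLam: "\<And>k i. k \<ge> 1 \<Longrightarrow> i \<in> {1..N-1} \<Longrightarrow>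
        Lam k i = Lam (k-1) i + beta i *\<^sub>R (W k i ** V k (i-1) - U k i)"
    and updLamN: "\<And>k. k \<ge> 1 \<Longrightarrow> LamN k = LamN (k-1) + beta N *\<^sub>R (WN k ** V k (N-1) - VN k)"
    and Vmax0: "norm X \<le> Vmax 0"
    and beta_large: "\<And>i. i \<in> {1..N-1} \<Longrightarrow>
        beta i > max (32 * (1 + sqrt 2) * mu * a i) (16 * mu * psi1^2)"
    and betaN_large: "beta N > 1"
    and heps_pos: "\<And>i. i \<in> {1..N-1} \<Longrightarrow> 0 < heps i"
    and eps_range: "\<And>i. i \<in> {1..N-1} \<Longrightarrow> 0 < eps i \<and> eps i < omin i / 4"
    and omega_range: "\<And>k i. i \<in> {1..N-1} \<Longrightarrow> omin i < omega k i \<and> omega k i < omax i"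
    and Vmax_bound: "\<And>k i. i \<in> {1..N-1} \<Longrightarrow> norm (V k i) \<le> Vmax i"
begin

lemma beta_pos:
  assumes "i \<in> {1..N-1}"
  shows "beta i > 0"
proof -
  have "0 \<le> 16 * mu * psi1^2" using mu_pos by simp
  also have "\<dots> < beta i" using beta_large[OF assms] by simp
  finally show ?thesis .
qed

lemma betaN_pos: "beta N > 0"
  using betaN_large by simp

lemma act_has_derivatives:
  assumes "i \<in> {1..N-1}"
  shows "(act i has_real_derivative deriv (act i) x) (at x)"
    and "(deriv (act i) has_real_derivative deriv (deriv (act i)) x) (at x)"
  using act_analytic[OF assms] real_analytic_has_real_derivative real_analytic_deriv by blast+

lemma abs_V_entry_le:
  assumes "i \<in> {1..N-1}"
  shows "\<bar>V k i $ r $ c\<bar> \<le> Vmax i" and "\<bar>V k (i-1) $ r $ c\<bar> \<le> Vmax (i-1)"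
proof -
  show "\<bar>V k i $ r $ c\<bar> \<le> Vmax i"
    using abs_matrix_entry_le_norm Vmax_bound[OF assms] order_trans by blast
  show "\<bar>V k (i-1) $ r $ c\<bar> \<le> Vmax (i-1)"
  proof (cases "i = 1")
    case True
    then show ?thesis using V0 abs_matrix_entry_le_norm[of X r c] Vmax0 by simp
  next
    case False
    then have "i - 1 \<in> {1..N-1}" using assms by auto
    then show ?thesis using abs_matrix_entry_le_norm Vmax_bound order_trans by blast
  qed
qed

lemma a_nonneg:
  assumes "i \<in> {1..N-1}"
  shows "a i \<ge> 0"
proof -
  have "0 \<le> psi0" "0 \<le> psi1" "0 \<le> psi2"
    using act_bound0[OF assms, of 0] act_bound1[OF assms, of 0] act_bound2[OF assms, of 0] by linarith+
  moreover have "0 \<le> Vmax i" "0 \<le> Vmax (i-1)"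
    using abs_V_entry_le[OF assms] abs_ge_zero order_trans by blast+
  ultimately show ?thesis unfolding a_def a_par_def by simp
qed

lemma omega_window_at:
  assumes i: "i \<in> {1..N-1}"
  shows "omin i > 0"
    and "\<And>w. omin i < w \<Longrightarrow> w < omax i
      \<Longrightarrow> theta i - w/2 + 4 * (mu * a i + w)^2 / beta i \<le> - 8 * (heps i)^2 / beta i"
    and "\<And>w. 0 \<le> w \<Longrightarrow> w < omax i \<Longrightarrow> 4 * w^2 / beta i - theta i \<le> - eps i"
proof -
  have b: "beta i > 32 * (1 + sqrt 2) * mu * a i" using beta_large[OF i] by simp
  note assms = mu_pos a_nonneg[OF i] b heps_pos[OF i]
  show "omin i > 0" unfolding omin_def by (rule omega_min_pos[OF assms])
  show "theta i - w/2 + 4 * (mu * a i + w)^2 / beta i \<le> - 8 * (heps i)^2 / beta i"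
    if "omin i < w" "w < omax i" for w
    using omega_window_new_coefficient[OF assms, of w "eps i"] that
    unfolding theta_def omin_def omax_def by simp
  show "4 * w^2 / beta i - theta i \<le> - eps i" if "0 \<le> w" "w < omax i" for w
    using omega_window_old_coefficient[OF assms, of "eps i" w] that eps_range[OF i]
    unfolding theta_def omin_def omax_def by simp
qed

lemma omega_pos: "i \<in> {1..N-1} \<Longrightarrow> omega k i > 0"
  using omega_range omega_window_at(1) less_trans by blast

definition layer :: "nat \<Rightarrow> real^'d^'d \<Rightarrow> real^'n^'d \<Rightarrow> real^'n^'d \<Rightarrow> real^'n^'d \<Rightarrow> real^'n^'d \<Rightarrow> real"
  where "layer i Wi Vp Ui Vi Li =
    mu/2 * (norm (Vp + ent (act i) Ui - Vi))^2 + penalty (beta i) Li (Wi ** Vp - Ui)"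

definition output_layer :: "real^'d^'q \<Rightarrow> real^'n^'d \<Rightarrow> real^'n^'q \<Rightarrow> real^'n^'q \<Rightarrow> real"
  where "output_layer WNk Vl VNk LNk = 1/2 * (norm (VNk - Y))^2 + penalty (beta N) LNk (WNk ** Vl - VNk)"

lemma L3s_eq_layers:
  "L3s N Y lam mu beta act W' WN' U' V' VN' Lam' LamN'
    = lam/2 * ((\<Sum>i=1..N-1. (norm (W' i))^2) + (norm WN')^2)
      + (\<Sum>i=1..N-1. layer i (W' i) (V' (i-1)) (U' i) (V' i) (Lam' i))
      + output_layer WN' (V' (N-1)) VN' LamN'"
  unfolding L3s_def layer_def output_layer_def penalty_def sum.distrib sum_distrib_left by simp

definition dW :: "nat \<Rightarrow> nat \<Rightarrow> real" where "dW k i = (norm (W k i - W (k-1) i))^2"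
definition dWN :: "nat \<Rightarrow> real" where "dWN k = (norm (WN k - WN (k-1)))^2"
definition dU :: "nat \<Rightarrow> nat \<Rightarrow> real" where "dU k i = (norm (U k i - U (k-1) i))^2"
definition dV :: "nat \<Rightarrow> nat \<Rightarrow> real" where "dV k i = (norm (V k i - V (k-1) i))^2"
definition dVN :: "nat \<Rightarrow> real" where "dVN k = (norm (VN k - VN (k-1)))^2"
definition dLam :: "nat \<Rightarrow> nat \<Rightarrow> real" where "dLam k i = (norm (Lam k i - Lam (k-1) i))^2"
definition dLamN :: "nat \<Rightarrow> real" where "dLamN k = (norm (LamN k - LamN (k-1)))^2"

lemma W_step:
  assumes k: "k \<ge> 1" and i: "i \<in> {1..N-1}"
  shows "lam/2 * (norm (W k i))^2 + layer i (W k i) (V (k-1) (i-1)) (U (k-1) i) (V (k-1) i) (Lam (k-1) i)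
      + lam/2 * dW k i
    \<le> lam/2 * (norm (W (k-1) i))^2
      + layer i (W (k-1) i) (V (k-1) (i-1)) (U (k-1) i) (V (k-1) i) (Lam (k-1) i)"
proof -
  define f where "f Z = lam/2 * (norm Z)^2
    + beta i/2 * (norm (Z ** V (k-1) (i-1) - U (k-1) i + (1/beta i) *\<^sub>R Lam (k-1) i))^2" for Z
  have "strongly_convex (lam + 0) f"
    unfolding f_def
  proof (rule strongly_convex_add)
    show "strongly_convex lam (\<lambda>Z::real^'d^'d. lam/2 * (norm Z)^2)"
      by (rule strongly_convex_sq_norm) (use lam_pos in simp)
    show "strongly_convex 0
        (\<lambda>Z. beta i/2 * (norm (Z ** V (k-1) (i-1) - U (k-1) i + (1/beta i) *\<^sub>R Lam (k-1) i))^2)"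
      by (rule convex_sq_norm_affine[OF linear_matrix_mult_right, where b = "(1/beta i) *\<^sub>R Lam (k-1) i - U (k-1) i"])
        (use beta_pos[OF i] in auto)
  qed
  from strongly_convex_minimizer_growth[OF this] updW[OF k i] lam_pos
  have "lam/2 * (norm (W (k-1) i - W k i))^2 \<le> f (W (k-1) i) - f (W k i)"
    by (simp add: f_def)
  then show ?thesis
    unfolding f_def dW_def layer_def penalty_eq_shifted_sq[OF beta_pos[OF i]]
    by (simp add: norm_minus_commute)
qed

lemma WN_step:
  assumes k: "k \<ge> 1"
  shows "lam/2 * (norm (WN k))^2 + output_layer (WN k) (V (k-1) (N-1)) (VN (k-1)) (LamN (k-1)) + lam/2 * dWN k
    \<le> lam/2 * (norm (WN (k-1)))^2 + output_layer (WN (k-1)) (V (k-1) (N-1)) (VN (k-1)) (LamN (k-1))"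
proof -
  define f where "f Z = lam/2 * (norm Z)^2
    + beta N/2 * (norm (Z ** V (k-1) (N-1) - VN (k-1) + (1/beta N) *\<^sub>R LamN (k-1)))^2" for Z
  have "strongly_convex (lam + 0) f"
    unfolding f_def
  proof (rule strongly_convex_add)
    show "strongly_convex lam (\<lambda>Z::real^'d^'q. lam/2 * (norm Z)^2)"
      by (rule strongly_convex_sq_norm) (use lam_pos in simp)
    show "strongly_convex 0
        (\<lambda>Z. beta N/2 * (norm (Z ** V (k-1) (N-1) - VN (k-1) + (1/beta N) *\<^sub>R LamN (k-1)))^2)"
      by (rule convex_sq_norm_affine[OF linear_matrix_mult_right, where b = "(1/beta N) *\<^sub>R LamN (k-1) - VN (k-1)"])
        (use betaN_pos in auto)
  qed
  from strongly_convex_minimizer_growth[OF this] updWN[OF k] lam_pos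
  have "lam/2 * (norm (WN (k-1) - WN k))^2 \<le> f (WN (k-1)) - f (WN k)"
    by (simp add: f_def)
  then show ?thesis
    unfolding f_def dWN_def output_layer_def penalty_eq_shifted_sq[OF betaN_pos]
    by (simp add: norm_minus_commute)
qed

lemma U_step:
  assumes k: "k \<ge> 1" and i: "i \<in> {1..N-1}"
  shows "layer i (W k i) (V k (i-1)) (U k i) (V (k-1) i) (Lam (k-1) i) + omega (k-1) i/2 * dU k i
    \<le> layer i (W k i) (V k (i-1)) (U (k-1) i) (V (k-1) i) (Lam (k-1) i)"
  using updU[OF k i, of "U (k-1) i"]
  unfolding layer_def dU_def penalty_diff_eq_shifted_sq[OF beta_pos[OF i]] by simp

lemma V_step:
  assumes k: "k \<ge> 1" and i: "i \<in> {1..N-2}"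
  shows "layer i (W k i) (V k (i-1)) (U k i) (V k i) (Lam (k-1) i)
      + layer (i+1) (W k (i+1)) (V k i) (U (k-1) (i+1)) (V (k-1) (i+1)) (Lam (k-1) (i+1))
      + mu * dV k i
    \<le> layer i (W k i) (V k (i-1)) (U k i) (V (k-1) i) (Lam (k-1) i)
      + layer (i+1) (W k (i+1)) (V (k-1) i) (U (k-1) (i+1)) (V (k-1) (i+1)) (Lam (k-1) (i+1))"
proof -
  have i1: "i + 1 \<in> {1..N-1}" using i by auto
  define p where "p = V k (i-1) + ent (act i) (U k i)"
  define q where "q = V (k-1) (i+1) - ent (act (i+1)) (U (k-1) (i+1))"
  define f where "f Z = mu/2 * (norm (Z - p))^2 + mu/2 * (norm (Z - q))^2
    + beta (i+1)/2 * (norm (W k (i+1) ** Z - U (k-1) (i+1) + (1/beta (i+1)) *\<^sub>R Lam (k-1) (i+1)))^2"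
    for Z
  have eq: "norm (p - Z) = norm (Z - p)" "norm (Z + ent (act (i+1)) (U (k-1) (i+1)) - V (k-1) (i+1)) = norm (Z - q)"
    for Z
    by (simp_all add: norm_minus_commute q_def algebra_simps)
  have sc: "strongly_convex (mu + mu + 0) f"
    unfolding f_def
    by (intro strongly_convex_add strongly_convex_sq_dist
        convex_sq_norm_affine[OF linear_matrix_mult_left, where b = "(1/beta (i+1)) *\<^sub>R Lam (k-1) (i+1) - U (k-1) (i+1)"])
      (use mu_pos beta_pos[OF i1] in auto)
  have min: "f (V k i) \<le> f Z" for Z
    using updV[OF k i, of Z] unfolding f_def p_def[symmetric] eq by linarith
  have "(mu + mu + 0)/2 * (norm (V (k-1) i - V k i))^2 \<le> f (V (k-1) i) - f (V k i)"
    by (rule strongly_convex_minimizer_growth[OF sc _ min]) (use mu_pos in simp)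
  then show ?thesis
    unfolding dV_def layer_def penalty_eq_shifted_sq[OF beta_pos[OF i1]] p_def[symmetric] eq
    by (simp add: f_def norm_minus_commute)
qed

lemma V_last_step:
  assumes k: "k \<ge> 1"
  shows "layer (N-1) (W k (N-1)) (V k (N-2)) (U k (N-1)) (V k (N-1)) (Lam (k-1) (N-1))
      + output_layer (WN k) (V k (N-1)) (VN (k-1)) (LamN (k-1)) + mu/2 * dV k (N-1)
    \<le> layer (N-1) (W k (N-1)) (V k (N-2)) (U k (N-1)) (V (k-1) (N-1)) (Lam (k-1) (N-1))
      + output_layer (WN k) (V (k-1) (N-1)) (VN (k-1)) (LamN (k-1))"
proof -
  define f where "f Z = mu/2 * (norm (Z - V k (N-2) - ent (act (N-1)) (U k (N-1))))^2
    + beta N/2 * (norm (WN k ** Z - VN (k-1) + (1/beta N) *\<^sub>R LamN (k-1)))^2" for Z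
  have "strongly_convex (mu + 0) f"
    unfolding f_def
  proof (rule strongly_convex_add)
    show "strongly_convex mu (\<lambda>Z. mu/2 * (norm (Z - V k (N-2) - ent (act (N-1)) (U k (N-1))))^2)"
      using strongly_convex_sq_dist[of mu "V k (N-2) + ent (act (N-1)) (U k (N-1))"] mu_pos
      by (simp add: diff_diff_eq)
    show "strongly_convex 0
        (\<lambda>Z. beta N/2 * (norm (WN k ** Z - VN (k-1) + (1/beta N) *\<^sub>R LamN (k-1)))^2)"
      by (rule convex_sq_norm_affine[OF linear_matrix_mult_left, where b = "(1/beta N) *\<^sub>R LamN (k-1) - VN (k-1)"])
        (use betaN_pos in auto)
  qed
  from strongly_convex_minimizer_growth[OF this] updVlast[OF k] mu_pos
  have "mu/2 * (norm (V (k-1) (N-1) - V k (N-1)))^2 \<le> f (V (k-1) (N-1)) - f (V k (N-1))"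
    by (simp add: f_def)
  moreover have "norm (Vp + E - Z) = norm (Z - Vp - E)" for Vp E Z :: "real^'n^'d"
    by (metis minus_diff_eq norm_minus_cancel diff_diff_eq)
  ultimately show ?thesis
    unfolding f_def dV_def layer_def output_layer_def penalty_eq_shifted_sq[OF betaN_pos]
    by (simp add: norm_minus_commute)
qed

lemma VN_step:
  assumes k: "k \<ge> 1"
  shows "output_layer (WN k) (V k (N-1)) (VN k) (LamN (k-1)) + (1 + beta N)/2 * dVN k
    \<le> output_layer (WN k) (V k (N-1)) (VN (k-1)) (LamN (k-1))"
proof -
  have "(1 + beta N) *\<^sub>R VN k = Y + beta N *\<^sub>R (WN k ** V k (N-1)) + LamN (k-1)"
    using updVN[OF k] betaN_pos by simp
  from penalized_least_squares_identity[OF this, of "VN (k-1)"] show ?thesis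
    unfolding output_layer_def dVN_def by (simp add: norm_minus_commute)
qed

lemma Lam_step:
  assumes k: "k \<ge> 1" and i: "i \<in> {1..N-1}"
  shows "layer i (W k i) (V k (i-1)) (U k i) (V k i) (Lam k i)
    = layer i (W k i) (V k (i-1)) (U k i) (V k i) (Lam (k-1) i) + dLam k i / beta i"
  unfolding layer_def dLam_def
  using penalty_multiplier_update[OF _ updLam[OF k i]] beta_pos[OF i] by simp

lemma LamN_step:
  assumes k: "k \<ge> 1"
  shows "output_layer (WN k) (V k (N-1)) (VN k) (LamN k)
    = output_layer (WN k) (V k (N-1)) (VN k) (LamN (k-1)) + dLamN k / beta N"
  unfolding output_layer_def dLamN_def
  using penalty_multiplier_update[OF _ updLamN[OF k]] betaN_pos by simp

definition L_iter :: "nat \<Rightarrow> real"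
  where "L_iter k = L3s N Y lam mu beta act (W k) (WN k) (U k) (V k) (VN k) (Lam k) (LamN k)"

definition V_decrease :: "nat \<Rightarrow> real" where "V_decrease i = (if i = N-1 then mu/2 else mu)"

lemma layer_sweep:
  assumes k: "k \<ge> 1"
  shows "(\<Sum>i=1..N-1. layer i (W k i) (V k (i-1)) (U k i) (V k i) (Lam (k-1) i))
      + (\<Sum>i=1..N-1. omega (k-1) i/2 * dU k i + V_decrease i * dV k i)
      + output_layer (WN k) (V k (N-1)) (VN (k-1)) (LamN (k-1))
    \<le> (\<Sum>i=1..N-1. layer i (W k i) (V (k-1) (i-1)) (U (k-1) i) (V (k-1) i) (Lam (k-1) i))
      + output_layer (WN k) (V (k-1) (N-1)) (VN (k-1)) (LamN (k-1))"
proof (rule sweep_sum_le[where t = "\<lambda>i. layer i (W k i) (V k (i-1)) (U (k-1) i) (V (k-1) i) (Lam (k-1) i)"])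
  fix i assume "1 \<le> i" "i < N - 1"
  then have "i \<in> {1..N-1}" "i \<in> {1..N-2}" by auto
  from U_step[OF k this(1)] V_step[OF k this(2)] \<open>i < N - 1\<close>
  show "layer i (W k i) (V k (i-1)) (U k i) (V k i) (Lam (k-1) i)
      + layer (Suc i) (W k (Suc i)) (V k (Suc i - 1)) (U (k-1) (Suc i)) (V (k-1) (Suc i)) (Lam (k-1) (Suc i))
      + (omega (k-1) i/2 * dU k i + V_decrease i * dV k i)
    \<le> layer i (W k i) (V k (i-1)) (U (k-1) i) (V (k-1) i) (Lam (k-1) i)
      + layer (Suc i) (W k (Suc i)) (V (k-1) (Suc i - 1)) (U (k-1) (Suc i)) (V (k-1) (Suc i)) (Lam (k-1) (Suc i))"
    by (simp add: V_decrease_def)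
next
  have "N - 1 \<in> {1..N-1}" "N - 1 - 1 = N - 2" using N3 by auto
  with U_step[OF k this(1)] V_last_step[OF k]
  show "layer (N-1) (W k (N-1)) (V k (N-1-1)) (U k (N-1)) (V k (N-1)) (Lam (k-1) (N-1))
      + (omega (k-1) (N-1)/2 * dU k (N-1) + V_decrease (N-1) * dV k (N-1))
      + output_layer (WN k) (V k (N-1)) (VN (k-1)) (LamN (k-1))
    \<le> layer (N-1) (W k (N-1)) (V k (N-1-1)) (U (k-1) (N-1)) (V (k-1) (N-1)) (Lam (k-1) (N-1))
      + output_layer (WN k) (V (k-1) (N-1)) (VN (k-1)) (LamN (k-1))"
    by (simp add: V_decrease_def)
qed (use N3 V0 in auto)

lemma L_iter_descent:
  assumes k: "k \<ge> 1"
  shows "L_iter k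
      + (\<Sum>i=1..N-1. omega (k-1) i/2 * dU k i + V_decrease i * dV k i)
      + lam/2 * ((\<Sum>i=1..N-1. dW k i) + dWN k) + (1 + beta N)/2 * dVN k
    \<le> L_iter (k-1) + (\<Sum>i=1..N-1. dLam k i / beta i) + dLamN k / beta N"
proof -
  have "(\<Sum>i=1..N-1. layer i (W k i) (V k (i-1)) (U k i) (V k i) (Lam k i))
      = (\<Sum>i=1..N-1. layer i (W k i) (V k (i-1)) (U k i) (V k i) (Lam (k-1) i))
        + (\<Sum>i=1..N-1. dLam k i / beta i)"
    unfolding sum.distrib[symmetric] using Lam_step[OF k] by (intro sum.cong) auto
  moreover have "(\<Sum>i=1..N-1. lam/2 * (norm (W k i))^2
        + layer i (W k i) (V (k-1) (i-1)) (U (k-1) i) (V (k-1) i) (Lam (k-1) i) + lam/2 * dW k i)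
      \<le> (\<Sum>i=1..N-1. lam/2 * (norm (W (k-1) i))^2
        + layer i (W (k-1) i) (V (k-1) (i-1)) (U (k-1) i) (V (k-1) i) (Lam (k-1) i))"
    by (intro sum_mono W_step[OF k])
  ultimately show ?thesis
    using layer_sweep[OF k] WN_step[OF k] VN_step[OF k] LamN_step[OF k]
    unfolding L_iter_def L3s_eq_layers sum.distrib sum_distrib_left distrib_left
    by linarith
qed

text \<open>First-order condition of the \<open>U\<close>-subproblem combined with the multiplier update.\<close>

lemma Lam_entry_eq:
  assumes k: "k \<ge> 1" and i: "i \<in> {1..N-1}"
  shows "Lam k i $ r $ c
    = mu * (deriv (act i) (U k i $ r $ c) * (V k (i-1) $ r $ c + act i (U k i $ r $ c) - V (k-1) i $ r $ c))
      + omega (k-1) i * (U k i $ r $ c - U (k-1) i $ r $ c)"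
proof -
  have "mu * deriv (act i) (U k i $ r $ c) * (V k (i-1) $ r $ c + act i (U k i $ r $ c) - V (k-1) i $ r $ c)
      + beta i * (U k i $ r $ c - (W k i ** V k (i-1) + (1/beta i) *\<^sub>R Lam (k-1) i) $ r $ c)
      + omega (k-1) i * (U k i $ r $ c - U (k-1) i $ r $ c) = 0"
    by (rule prox_activation_stationary[OF _ act_has_derivatives(1)[OF i]])
      (use updU[OF k i] in \<open>simp add: diff_diff_eq\<close>)
  moreover have "Lam k i $ r $ c = Lam (k-1) i $ r $ c + beta i * ((W k i ** V k (i-1)) $ r $ c - U k i $ r $ c)"
    using updLam[OF k i] by simp
  ultimately show ?thesis
    using beta_pos[OF i] by (simp add: algebra_simps)
qed

lemma Lam_entry_diff_bound:
  assumes k: "k \<ge> 2" and i: "i \<in> {1..N-1}"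
  shows "\<bar>(Lam k i - Lam (k-1) i) $ r $ c\<bar>
    \<le> (mu * a i + omega (k-1) i) * \<bar>(U k i - U (k-1) i) $ r $ c\<bar>
      + (mu * psi1) * \<bar>(V k (i-1) - V (k-1) (i-1)) $ r $ c\<bar>
      + (mu * psi1) * \<bar>(V (k-1) i - V (k-2) i) $ r $ c\<bar>
      + omega (k-2) i * \<bar>(U (k-1) i - U (k-2) i) $ r $ c\<bar>"
proof -
  define w w' where "w = omega (k-1) i" and "w' = omega (k-2) i"
  define g where "g k' = deriv (act i) (U k' i $ r $ c)
    * (V k' (i-1) $ r $ c + act i (U k' i $ r $ c) - V (k'-1) i $ r $ c)" for k'
  have k2: "k - 1 - 1 = k - 2" by simp
  have "Lam k i $ r $ c = mu * g k + w * (U k i $ r $ c - U (k-1) i $ r $ c)"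
    using Lam_entry_eq[of k i r c] k i unfolding g_def w_def by simp
  moreover have "Lam (k-1) i $ r $ c = mu * g (k-1) + w' * (U (k-1) i $ r $ c - U (k-2) i $ r $ c)"
    using Lam_entry_eq[of "k-1" i r c] k i unfolding g_def w'_def k2 by simp
  ultimately have eq: "(Lam k i - Lam (k-1) i) $ r $ c = mu * (g k - g (k-1))
      + w * (U k i $ r $ c - U (k-1) i $ r $ c) - w' * (U (k-1) i $ r $ c - U (k-2) i $ r $ c)"
    by (simp add: algebra_simps)
  have tri: "\<bar>p + q - t\<bar> \<le> \<bar>p\<bar> + \<bar>q\<bar> + \<bar>t\<bar>" for p q t :: real by arith
  have "\<bar>(Lam k i - Lam (k-1) i) $ r $ c\<bar> \<le> \<bar>mu * (g k - g (k-1))\<bar>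
      + \<bar>w * (U k i $ r $ c - U (k-1) i $ r $ c)\<bar> + \<bar>w' * (U (k-1) i $ r $ c - U (k-2) i $ r $ c)\<bar>"
    unfolding eq by (rule tri)
  also have "\<dots> = mu * \<bar>g k - g (k-1)\<bar> + w * \<bar>U k i $ r $ c - U (k-1) i $ r $ c\<bar>
      + w' * \<bar>U (k-1) i $ r $ c - U (k-2) i $ r $ c\<bar>"
    using mu_pos omega_pos[OF i, of "k-1"] omega_pos[OF i, of "k-2"] unfolding w_def w'_def
    by (simp add: abs_mult)
  finally have "\<bar>(Lam k i - Lam (k-1) i) $ r $ c\<bar> \<le> mu * \<bar>g k - g (k-1)\<bar>
      + w * \<bar>U k i $ r $ c - U (k-1) i $ r $ c\<bar> + w' * \<bar>U (k-1) i $ r $ c - U (k-2) i $ r $ c\<bar>" .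
  moreover have "\<bar>g k - g (k-1)\<bar> \<le> a i * \<bar>U k i $ r $ c - U (k-1) i $ r $ c\<bar>
      + psi1 * \<bar>V k (i-1) $ r $ c - V (k-1) (i-1) $ r $ c\<bar> + psi1 * \<bar>V (k-1) i $ r $ c - V (k-2) i $ r $ c\<bar>"
    using residual_gradient_lipschitz[OF act_has_derivatives[OF i] act_bound0[OF i] act_bound1[OF i]
        act_bound2[OF i] abs_V_entry_le(2)[OF i] abs_V_entry_le(1)[OF i]] k
    unfolding g_def a_def a_par_def k2 by simp
  note mult_left_mono[OF this less_imp_le[OF mu_pos]]
  ultimately show ?thesis unfolding w_def w'_def by (simp add: ring_distribs)
qed

lemma dLam_bound:
  assumes k: "k \<ge> 2" and i: "i \<in> {1..N-1}"
  shows "dLam k i \<le> 4 * ((mu * a i + omega (k-1) i)^2 * dU k i + (mu * psi1)^2 * dV k (i-1)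
    + (mu * psi1)^2 * dV (k-1) i + (omega (k-2) i)^2 * dU (k-1) i)"
proof -
  have "norm (Lam k i - Lam (k-1) i) \<le> (mu * a i + omega (k-1) i) * norm (U k i - U (k-1) i)
      + (mu * psi1) * norm (V k (i-1) - V (k-1) (i-1)) + (mu * psi1) * norm (V (k-1) i - V (k-2) i)
      + omega (k-2) i * norm (U (k-1) i - U (k-2) i)"
    using mu_pos a_nonneg[OF i] omega_pos[OF i, of "k-1"] omega_pos[OF i, of "k-2"] act_bound1[OF i, of 0]
    by (intro norm_matrix_le_by_entries4[OF Lam_entry_diff_bound[OF k i]]) auto
  then have "(norm (Lam k i - Lam (k-1) i))^2 \<le> (((mu * a i + omega (k-1) i) * norm (U k i - U (k-1) i))
      + ((mu * psi1) * norm (V k (i-1) - V (k-1) (i-1))) + ((mu * psi1) * norm (V (k-1) i - V (k-2) i))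
      + (omega (k-2) i * norm (U (k-1) i - U (k-2) i)))^2"
    by (rule power_mono) simp
  also have "\<dots> \<le> 4 * (((mu * a i + omega (k-1) i) * norm (U k i - U (k-1) i))^2
      + ((mu * psi1) * norm (V k (i-1) - V (k-1) (i-1)))^2 + ((mu * psi1) * norm (V (k-1) i - V (k-2) i))^2
      + (omega (k-2) i * norm (U (k-1) i - U (k-2) i))^2)"
    by (rule sq_sum4_le)
  finally show ?thesis
    unfolding dLam_def dU_def dV_def diff_diff_left one_add_one by (simp add: power_mult_distrib)
qed

lemma LamN_eq:
  assumes k: "k \<ge> 1"
  shows "LamN k = VN k - Y"
proof -
  have "(1 + beta N) *\<^sub>R VN k = Y + beta N *\<^sub>R (WN k ** V k (N-1)) + LamN (k-1)"
    using updVN[OF k] betaN_pos by simp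
  then have "LamN (k-1) + beta N *\<^sub>R (WN k ** V k (N-1)) = (1 + beta N) *\<^sub>R VN k - Y"
    by (simp add: algebra_simps)
  moreover have "LamN k = (LamN (k-1) + beta N *\<^sub>R (WN k ** V k (N-1))) - beta N *\<^sub>R VN k"
    using updLamN[OF k] by (simp add: algebra_simps)
  ultimately have "LamN k = ((1 + beta N) *\<^sub>R VN k - Y) - beta N *\<^sub>R VN k"
    by simp
  also have "\<dots> = VN k - Y" by (simp add: scaleR_add_left)
  finally show ?thesis .
qed

lemma dLamN_eq: "k \<ge> 2 \<Longrightarrow> dLamN k = dVN k"
  unfolding dLamN_def dVN_def using LamN_eq[of k] LamN_eq[of "k-1"] by simp

text \<open>The terms \<open>\<parallel>V\<^sub>i\<^sub>-\<^sub>1\<^sup>k - V\<^sub>i\<^sub>-\<^sub>1\<^sup>k\<^sup>-\<^sup>1\<parallel>\<^sup>2\<close> of the multiplier bound, shifted to layer \<open>i\<close>.\<close>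

definition V_coupling :: "nat \<Rightarrow> real"
  where "V_coupling i = (if i < N-1 then 4 * mu^2 * psi1^2 / beta (Suc i) else 0)"

lemma dual_increment_bound:
  assumes k: "k \<ge> 2"
  shows "(\<Sum>i=1..N-1. dLam k i / beta i)
    \<le> (\<Sum>i=1..N-1. 4 * (mu * a i + omega (k-1) i)^2 / beta i * dU k i
        + 4 * (omega (k-2) i)^2 / beta i * dU (k-1) i + 4 * mu^2 * psi1^2 / beta i * dV (k-1) i
        + V_coupling i * dV k i)"
proof -
  have mono: "(\<Sum>i=1..N-1. dLam k i / beta i)
    \<le> (\<Sum>i=1..N-1. 4 * (mu * a i + omega (k-1) i)^2 / beta i * dU k i
        + 4 * (omega (k-2) i)^2 / beta i * dU (k-1) i + 4 * mu^2 * psi1^2 / beta i * dV (k-1) i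
        + 4 * mu^2 * psi1^2 / beta i * dV k (i-1))"
  proof (rule sum_mono)
    fix i assume i: "i \<in> {1..N-1}"
    from divide_right_mono[OF dLam_bound[OF k i], of "beta i"] beta_pos[OF i]
    show "dLam k i / beta i \<le> 4 * (mu * a i + omega (k-1) i)^2 / beta i * dU k i
        + 4 * (omega (k-2) i)^2 / beta i * dU (k-1) i + 4 * mu^2 * psi1^2 / beta i * dV (k-1) i
        + 4 * mu^2 * psi1^2 / beta i * dV k (i-1)"
      by (simp add: power_mult_distrib add_divide_distrib)
  qed
  have "(\<Sum>i=1..N-1. 4 * mu^2 * psi1^2 / beta i * dV k (i-1))
      = (\<Sum>i=1..N-1. if i < N-1 then 4 * mu^2 * psi1^2 / beta (Suc i) * dV k i else 0)"
    by (rule sum_shift_pred) (simp add: dV_def V0)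
  also have "\<dots> = (\<Sum>i=1..N-1. V_coupling i * dV k i)"
    by (intro sum.cong) (auto simp: V_coupling_def)
  finally show ?thesis using mono by (simp add: sum.distrib)
qed

definition rate :: "nat \<Rightarrow> real"
  where "rate i = min (8 * (heps i)^2 / beta i) (min (eps i) (mu/4 - 4 * mu^2 * psi1^2 / beta i))"

lemma activation_penalty_small: "i \<in> {1..N-1} \<Longrightarrow> 4 * mu^2 * psi1^2 / beta i < mu/4"
  using beta_large[of i] beta_pos[of i] mu_pos by (simp add: field_simps power2_eq_square)

lemma rate_pos: "i \<in> {1..N-1} \<Longrightarrow> rate i > 0"
  using heps_pos[of i] eps_range[of i] beta_pos[of i] activation_penalty_small[of i]
  unfolding rate_def by auto

lemma layer_coefficients:
  assumes k: "k \<ge> 2" and i: "i \<in> {1..N-1}"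
  shows "theta i * dU k i + eta i * dV k i - (omega (k-1) i/2 * dU k i + V_decrease i * dV k i)
      + (4 * (mu * a i + omega (k-1) i)^2 / beta i * dU k i
        + 4 * (omega (k-2) i)^2 / beta i * dU (k-1) i + 4 * mu^2 * psi1^2 / beta i * dV (k-1) i
        + V_coupling i * dV k i)
      - theta i * dU (k-1) i - eta i * dV (k-1) i
    \<le> - rate i * (dU k i + dU (k-1) i + dV (k-1) i + dV k i)"
proof -
  have r: "rate i \<le> 8 * (heps i)^2 / beta i" "rate i \<le> eps i"
    "rate i \<le> mu/4 - 4 * mu^2 * psi1^2 / beta i"
    unfolding rate_def by auto
  have cU: "theta i - omega (k-1) i/2 + 4 * (mu * a i + omega (k-1) i)^2 / beta i \<le> - rate i"
    using omega_window_at(2)[OF i] omega_range[OF i, of "k-1"] r(1) by fastforce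
  have "4 * (omega (k-2) i)^2 / beta i - theta i \<le> - eps i"
    using omega_range[OF i, of "k-2"] omega_pos[OF i, of "k-2"]
    by (intro omega_window_at(3)[OF i]) auto
  with r(2) have cU': "4 * (omega (k-2) i)^2 / beta i - theta i \<le> - rate i" by linarith
  have "0 \<le> 4 * mu^2 * psi1^2 / beta i" using beta_pos[OF i] by simp
  with r(3) have cV': "4 * mu^2 * psi1^2 / beta i - eta i \<le> - rate i"
    unfolding eta_def by linarith
  have cV: "eta i - V_decrease i + V_coupling i \<le> - rate i"
  proof (cases "i = N-1")
    case False
    then have "Suc i \<in> {1..N-1}" "i < N-1" using i by auto
    have "mu = 4 * (mu/4)" by simp
    then have "eta i - mu + 4 * mu^2 * psi1^2 / beta (Suc i) \<le> - rate i"
      using activation_penalty_small[OF \<open>Suc i \<in> {1..N-1}\<close>] r(3) mu_pos unfolding eta_def by linarith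
    with False \<open>i < N-1\<close> show ?thesis by (simp add: V_decrease_def V_coupling_def)
  qed (use r(3) in \<open>simp add: eta_def V_decrease_def V_coupling_def\<close>)
  have "0 \<le> dU k i" "0 \<le> dU (k-1) i" "0 \<le> dV (k-1) i" "0 \<le> dV k i"
    unfolding dU_def dV_def by simp_all
  from mult_right_mono[OF cU this(1)] mult_right_mono[OF cU' this(2)]
    mult_right_mono[OF cV' this(3)] mult_right_mono[OF cV this(4)]
  show ?thesis
    unfolding distrib_right left_diff_distrib mult_minus_left distrib_left by linarith
qed

definition Lext_iter :: "nat \<Rightarrow> real"
  where "Lext_iter k = Lext N Y lam mu beta act theta eta (W k) (WN k) (U k) (V k) (VN k) (Lam k) (LamN k)
    (U (k-1)) (V (k-1))"

definition primal_increment :: "nat \<Rightarrow> real"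
  where "primal_increment k = (\<Sum>i=1..N-1. dW k i) + dWN k + (\<Sum>i=1..N-1. dU k i)
    + (\<Sum>i=1..N-1. dV k i) + dVN k + (\<Sum>i=1..N-1. dU (k-1) i) + (\<Sum>i=1..N-1. dV (k-1) i)"

definition increment :: "nat \<Rightarrow> real"
  where "increment k = (\<Sum>i=1..N-1. dW k i) + dWN k + (\<Sum>i=1..N-1. dU k i)
    + (\<Sum>i=1..N-1. dV k i) + dVN k + (\<Sum>i=1..N-1. dLam k i) + dLamN k
    + (\<Sum>i=1..N-1. dU (k-1) i) + (\<Sum>i=1..N-1. dV (k-1) i)"

lemma Lext_iter_eq:
  "Lext_iter k = L_iter k + (\<Sum>i=1..N-1. theta i * dU k i) + (\<Sum>i=1..N-1. eta i * dV k i)"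
  unfolding Lext_iter_def L_iter_def Lext_def dU_def dV_def ..

definition descent_rate :: real
  where "descent_rate = min (Min (rate ` {1..N-1})) (min (lam/2) ((1 + beta N)/2 - 1 / beta N))"

lemma descent_rate_pos: "descent_rate > 0"
proof -
  have "1 / beta N < 1" "1 < (1 + beta N)/2" using betaN_large by simp_all
  then have "1 / beta N < (1 + beta N)/2" by (rule less_trans)
  then have "0 < (1 + beta N)/2 - 1 / beta N" by (simp only: diff_gt_0_iff_gt)
  moreover have "Min (rate ` {1..N-1}) > 0" using rate_pos N3 by (subst Min_gr_iff) auto
  ultimately show ?thesis unfolding descent_rate_def using lam_pos by simp
qed

lemma descent_rate_le:
  shows "\<And>i. i \<in> {1..N-1} \<Longrightarrow> descent_rate \<le> rate i"
    and "descent_rate \<le> lam/2" and "descent_rate \<le> (1 + beta N)/2 - 1 / beta N"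
  unfolding descent_rate_def
  by (meson Min_le finite_atLeastAtMost finite_imageI image_eqI min.coboundedI1)
    (intro min.coboundedI2 min.cobounded1 min.cobounded2)+

lemma layer_coefficients_sum:
  assumes k: "k \<ge> 2"
  shows "(\<Sum>i=1..N-1. theta i * dU k i) + (\<Sum>i=1..N-1. eta i * dV k i)
      - (\<Sum>i=1..N-1. omega (k-1) i/2 * dU k i + V_decrease i * dV k i)
      + (\<Sum>i=1..N-1. 4 * (mu * a i + omega (k-1) i)^2 / beta i * dU k i
        + 4 * (omega (k-2) i)^2 / beta i * dU (k-1) i + 4 * mu^2 * psi1^2 / beta i * dV (k-1) i
        + V_coupling i * dV k i)
      - (\<Sum>i=1..N-1. theta i * dU (k-1) i) - (\<Sum>i=1..N-1. eta i * dV (k-1) i)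
    \<le> - descent_rate * ((\<Sum>i=1..N-1. dU k i) + (\<Sum>i=1..N-1. dU (k-1) i) + (\<Sum>i=1..N-1. dV (k-1) i)
        + (\<Sum>i=1..N-1. dV k i))"
proof -
  let ?d = "\<lambda>i. dU k i + dU (k-1) i + dV (k-1) i + dV k i"
  have "(\<Sum>i=1..N-1. theta i * dU k i + eta i * dV k i
      - (omega (k-1) i/2 * dU k i + V_decrease i * dV k i)
      + (4 * (mu * a i + omega (k-1) i)^2 / beta i * dU k i
        + 4 * (omega (k-2) i)^2 / beta i * dU (k-1) i + 4 * mu^2 * psi1^2 / beta i * dV (k-1) i
        + V_coupling i * dV k i)
      - theta i * dU (k-1) i - eta i * dV (k-1) i)
    \<le> (\<Sum>i=1..N-1. - descent_rate * ?d i)"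
  proof (rule sum_mono)
    fix i assume i: "i \<in> {1..N-1}"
    have "0 \<le> ?d i" unfolding dU_def dV_def by simp
    from mult_right_mono[OF descent_rate_le(1)[OF i] this] layer_coefficients[OF k i]
    show "theta i * dU k i + eta i * dV k i - (omega (k-1) i/2 * dU k i + V_decrease i * dV k i)
      + (4 * (mu * a i + omega (k-1) i)^2 / beta i * dU k i
        + 4 * (omega (k-2) i)^2 / beta i * dU (k-1) i + 4 * mu^2 * psi1^2 / beta i * dV (k-1) i
        + V_coupling i * dV k i)
      - theta i * dU (k-1) i - eta i * dV (k-1) i \<le> - descent_rate * ?d i"
      by linarith
  qed
  then show ?thesis by (simp only: sum.distrib sum_subtractf sum_distrib_left[symmetric])
qed

lemma Lext_descent_primal:
  assumes k: "k \<ge> 2"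
  shows "Lext_iter k \<le> Lext_iter (k-1) - descent_rate * primal_increment k"
proof -
  have "0 \<le> (\<Sum>i=1..N-1. dW k i) + dWN k" "0 \<le> dVN k"
    unfolding dW_def dWN_def dVN_def by (simp_all add: sum_nonneg)
  from mult_right_mono[OF descent_rate_le(2) this(1)] mult_right_mono[OF descent_rate_le(3) this(2)]
  have "descent_rate * ((\<Sum>i=1..N-1. dW k i) + dWN k) \<le> lam/2 * ((\<Sum>i=1..N-1. dW k i) + dWN k)"
    "descent_rate * dVN k \<le> (1 + beta N)/2 * dVN k - dVN k / beta N"
    by (simp_all add: left_diff_distrib)
  with layer_coefficients_sum[OF k] L_iter_descent[of k] dual_increment_bound[OF k] dLamN_eq[OF k] k
  show ?thesis
    unfolding Lext_iter_eq primal_increment_def distrib_left by simp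
qed

definition multiplier_const :: real
  where "multiplier_const = (\<Sum>i=1..N-1. 4 * ((mu * a i + omax i)^2 + (mu * psi1)^2 + (omax i)^2))"

lemma multiplier_const_nonneg: "multiplier_const \<ge> 0"
  unfolding multiplier_const_def by (simp add: sum_nonneg)

lemma dLam_le_multiplier_const:
  assumes k: "k \<ge> 2" and i: "i \<in> {1..N-1}"
  shows "dLam k i \<le> multiplier_const * (dU k i + dV k (i-1) + dV (k-1) i + dU (k-1) i)"
proof -
  let ?K = multiplier_const
  have w: "0 < omega (k-1) i" "omega (k-1) i < omax i" "0 < omega (k-2) i" "omega (k-2) i < omax i"
    using omega_pos[OF i] omega_range[OF i] by auto
  have "0 \<le> mu * a i" using mu_pos a_nonneg[OF i] by simp
  with w have 1: "(mu * a i + omega (k-1) i)^2 \<le> (mu * a i + omax i)^2"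
    and 2: "(omega (k-2) i)^2 \<le> (omax i)^2"
    by (intro power_mono; simp)+
  have "4 * ((mu * a i + omax i)^2 + (mu * psi1)^2 + (omax i)^2) \<le> ?K"
    unfolding multiplier_const_def using i by (intro member_le_sum) auto
  moreover have "0 \<le> (mu * a i + omax i)^2" "0 \<le> (mu * psi1)^2" "0 \<le> (omax i)^2" by simp_all
  ultimately have "4 * (mu * a i + omega (k-1) i)^2 \<le> ?K" "4 * (mu * psi1)^2 \<le> ?K"
    "4 * (omega (k-2) i)^2 \<le> ?K"
    using 1 2 unfolding distrib_left by linarith+
  moreover have "0 \<le> dU k i" "0 \<le> dV k (i-1)" "0 \<le> dV (k-1) i" "0 \<le> dU (k-1) i"
    unfolding dU_def dV_def by simp_all
  ultimately have "4 * (mu * a i + omega (k-1) i)^2 * dU k i \<le> ?K * dU k i"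
    "4 * (mu * psi1)^2 * dV k (i-1) \<le> ?K * dV k (i-1)" "4 * (mu * psi1)^2 * dV (k-1) i \<le> ?K * dV (k-1) i"
    "4 * (omega (k-2) i)^2 * dU (k-1) i \<le> ?K * dU (k-1) i"
    by (simp_all add: mult_right_mono)
  with dLam_bound[OF k i] show ?thesis
    unfolding distrib_left mult.assoc[symmetric] by linarith
qed

lemma sum_dV_pred_le: "(\<Sum>i=1..N-1. dV k (i-1)) \<le> (\<Sum>i=1..N-1. dV k i)"
proof -
  have "(\<Sum>i=1..N-1. 1 * dV k (i-1)) = (\<Sum>i=1..N-1. if i < N-1 then 1 * dV k i else 0)"
    by (rule sum_shift_pred) (simp add: dV_def V0)
  also have "\<dots> \<le> (\<Sum>i=1..N-1. dV k i)" by (intro sum_mono) (simp add: dV_def)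
  finally show ?thesis by simp
qed

lemma increment_le_primal:
  assumes k: "k \<ge> 2"
  shows "increment k \<le> (multiplier_const + 2) * primal_increment k"
proof -
  have "(\<Sum>i=1..N-1. dLam k i)
      \<le> multiplier_const * ((\<Sum>i=1..N-1. dU k i) + (\<Sum>i=1..N-1. dV k (i-1))
        + (\<Sum>i=1..N-1. dV (k-1) i) + (\<Sum>i=1..N-1. dU (k-1) i))"
    unfolding sum.distrib[symmetric] sum_distrib_left
    by (rule sum_mono) (rule dLam_le_multiplier_const[OF k])
  moreover have nonneg: "0 \<le> (\<Sum>i=1..N-1. dW k i)" "0 \<le> dWN k" "0 \<le> (\<Sum>i=1..N-1. dU k i)"
    "0 \<le> (\<Sum>i=1..N-1. dV k i)" "0 \<le> dVN k" "0 \<le> (\<Sum>i=1..N-1. dU (k-1) i)"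
    "0 \<le> (\<Sum>i=1..N-1. dV (k-1) i)"
    unfolding dW_def dWN_def dU_def dV_def dVN_def by (simp_all add: sum_nonneg)
  then have "(\<Sum>i=1..N-1. dU k i) + (\<Sum>i=1..N-1. dV k (i-1)) + (\<Sum>i=1..N-1. dV (k-1) i)
      + (\<Sum>i=1..N-1. dU (k-1) i) \<le> primal_increment k"
    using sum_dV_pred_le[of k] unfolding primal_increment_def by linarith
  ultimately have "(\<Sum>i=1..N-1. dLam k i) \<le> multiplier_const * primal_increment k"
    using mult_left_mono[OF _ multiplier_const_nonneg] order_trans by blast
  with nonneg dLamN_eq[OF k] show ?thesis
    unfolding increment_def primal_increment_def distrib_right distrib_left by linarith
qed

theorem Lext_sufficient_descent: "\<exists>C>0. \<forall>k\<ge>2. Lext_iter k \<le> Lext_iter (k-1) - C * increment k"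
proof (intro exI conjI allI impI)
  let ?C = "descent_rate / (multiplier_const + 2)"
  show "?C > 0" using descent_rate_pos multiplier_const_nonneg by simp
  fix k :: nat assume k: "k \<ge> 2"
  have "?C * increment k \<le> ?C * ((multiplier_const + 2) * primal_increment k)"
    using increment_le_primal[OF k] descent_rate_pos multiplier_const_nonneg
    by (intro mult_left_mono) auto
  with Lext_descent_primal[OF k] multiplier_const_nonneg
  show "Lext_iter k \<le> Lext_iter (k-1) - ?C * increment k" by simp
qed

end

theorem mainTheorem10:
  fixes N :: nat
    and X :: "real^'n^'d" and Y :: "real^'n^'q"
    and lam mu psi0 psi1 psi2 :: real
    and beta :: "nat \<Rightarrow> real"
    and act :: "nat \<Rightarrow> real \<Rightarrow> real"
    and Vmax heps eps :: "nat \<Rightarrow> real"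
    and omega :: "nat \<Rightarrow> nat \<Rightarrow> real"
    and W :: "nat \<Rightarrow> nat \<Rightarrow> real^'d^'d" and WN :: "nat \<Rightarrow> real^'d^'q"
    and U V Lam :: "nat \<Rightarrow> nat \<Rightarrow> real^'n^'d"
    and VN LamN :: "nat \<Rightarrow> real^'n^'q"
  defines "a \<equiv> \<lambda>i. a_par psi0 psi1 psi2 Vmax i"
  defines "omin \<equiv> \<lambda>i. omega_min (beta i) mu (a i) (heps i)"
  defines "omax \<equiv> \<lambda>i. omega_max (beta i) mu (a i) (heps i) (eps i)"
  defines "theta \<equiv> \<lambda>i. 4 * (omin i)^2 / beta i + omin i / 4"
  defines "eta \<equiv> \<lambda>i. 4 * mu^2 * psi1^2 / beta i + mu / 4"
  assumes N3: "N \<ge> 3"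
    and lam_pos: "lam > 0" and mu_pos: "mu > 0"
    and beta_pos: "\<forall>i\<in>{1..N}. beta i > 0"
    and psi_pos: "psi0 > 0" "psi1 > 0" "psi2 > 0"
    and sigma_an: "\<forall>i\<in>{1..N-1}. real_analytic (act i)"
    and sigma_bd0: "\<forall>i\<in>{1..N-1}. \<forall>x. \<bar>act i x\<bar> \<le> psi0"
    and sigma_bd1: "\<forall>i\<in>{1..N-1}. \<forall>x. \<bar>deriv (act i) x\<bar> \<le> psi1"
    and sigma_bd2: "\<forall>i\<in>{1..N-1}. \<forall>x. \<bar>deriv (deriv (act i)) x\<bar> \<le> psi2"
    and V0: "\<forall>k. V k 0 = X"
    and initU: "\<forall>i\<in>{1..N-1}. U 0 i = W 0 i ** V 0 (i-1)"
    and initV: "\<forall>i\<in>{1..N-1}. V 0 i = V 0 (i-1) + ent (act i) (U 0 i)"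
    and initVN: "VN 0 = WN 0 ** V 0 (N-1)"
    and initLam: "\<forall>i\<in>{1..N-1}. Lam 0 i = 0" and initLamN: "LamN 0 = 0"
    and updW: "\<forall>k\<ge>1. \<forall>i\<in>{1..N-1}. \<forall>Z.
        lam/2 * (norm (W k i))^2
          + beta i/2 * (norm (W k i ** V (k-1) (i-1) - U (k-1) i + (1/beta i) *\<^sub>R Lam (k-1) i))^2
        \<le> lam/2 * (norm Z)^2
          + beta i/2 * (norm (Z ** V (k-1) (i-1) - U (k-1) i + (1/beta i) *\<^sub>R Lam (k-1) i))^2"
    and updWN: "\<forall>k\<ge>1. \<forall>Z.
        lam/2 * (norm (WN k))^2
          + beta N/2 * (norm (WN k ** V (k-1) (N-1) - VN (k-1) + (1/beta N) *\<^sub>R LamN (k-1)))^2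
        \<le> lam/2 * (norm Z)^2
          + beta N/2 * (norm (Z ** V (k-1) (N-1) - VN (k-1) + (1/beta N) *\<^sub>R LamN (k-1)))^2"
    and updU: "\<forall>k\<ge>1. \<forall>i\<in>{1..N-1}. \<forall>Z.
        mu/2 * (norm (V k (i-1) + ent (act i) (U k i) - V (k-1) i))^2
          + beta i/2 * (norm (U k i - W k i ** V k (i-1) - (1/beta i) *\<^sub>R Lam (k-1) i))^2
          + omega (k-1) i/2 * (norm (U k i - U (k-1) i))^2
        \<le> mu/2 * (norm (V k (i-1) + ent (act i) Z - V (k-1) i))^2
          + beta i/2 * (norm (Z - W k i ** V k (i-1) - (1/beta i) *\<^sub>R Lam (k-1) i))^2
          + omega (k-1) i/2 * (norm (Z - U (k-1) i))^2"
    and updV: "\<forall>k\<ge>1. \<forall>i\<in>{1..N-2}. \<forall>Z.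
        mu/2 * (norm (V k (i-1) + ent (act i) (U k i) - V k i))^2
          + mu/2 * (norm (V k i + ent (act (i+1)) (U (k-1) (i+1)) - V (k-1) (i+1)))^2
          + beta (i+1)/2 * (norm (W k (i+1) ** V k i - U (k-1) (i+1)
                                  + (1/beta (i+1)) *\<^sub>R Lam (k-1) (i+1)))^2
        \<le> mu/2 * (norm (V k (i-1) + ent (act i) (U k i) - Z))^2
          + mu/2 * (norm (Z + ent (act (i+1)) (U (k-1) (i+1)) - V (k-1) (i+1)))^2
          + beta (i+1)/2 * (norm (W k (i+1) ** Z - U (k-1) (i+1)
                                  + (1/beta (i+1)) *\<^sub>R Lam (k-1) (i+1)))^2"
    and updVlast: "\<forall>k\<ge>1. \<forall>Z.
        mu/2 * (norm (V k (N-1) - V k (N-2) - ent (act (N-1)) (U k (N-1))))^2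
          + beta N/2 * (norm (WN k ** V k (N-1) - VN (k-1) + (1/beta N) *\<^sub>R LamN (k-1)))^2
        \<le> mu/2 * (norm (Z - V k (N-2) - ent (act (N-1)) (U k (N-1))))^2
          + beta N/2 * (norm (WN k ** Z - VN (k-1) + (1/beta N) *\<^sub>R LamN (k-1)))^2"
    and updVN: "\<forall>k\<ge>1. VN k = (1/(1 + beta N)) *\<^sub>R (Y + beta N *\<^sub>R (WN k ** V k (N-1)) + LamN (k-1))"
    and updLam: "\<forall>k\<ge>1. \<forall>i\<in>{1..N-1}. Lam k i = Lam (k-1) i + beta i *\<^sub>R (W k i ** V k (i-1) - U k i)"
    and updLamN: "\<forall>k\<ge>1. LamN k = LamN (k-1) + beta N *\<^sub>R (WN k ** V k (N-1) - VN k)"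
    and Vmax0: "Vmax 0 > norm X"
    and Vmax_pos: "\<forall>i\<in>{1..N-1}. Vmax i > 0"
    and A1: "\<forall>i\<in>{1..N-1}. beta i > max (32 * (1 + sqrt 2) * mu * a i) (16 * mu * psi1^2)"
    and A1N: "beta N > 1"
    and heps_rng: "\<forall>i\<in>{1..N-1}. 0 < heps i \<and> heps i < sqrt (Delta_par (beta i) mu (a i)) / 32"
    and eps_rng: "\<forall>i\<in>{1..N-1}. 0 < eps i \<and> eps i < omin i / 4"
    and A2: "\<forall>k. \<forall>i\<in>{1..N-1}. omin i < omega k i \<and> omega k i \<le> omega (Suc k) i
                                 \<and> omega (Suc k) i < omax i"
    and A3: "\<forall>k. \<forall>i\<in>{1..N-1}. norm (V k i) \<le> Vmax i"
  shows "\<exists>C>0. \<forall>k\<ge>2.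
     Lext N Y lam mu beta act theta eta (W k) (WN k) (U k) (V k) (VN k) (Lam k) (LamN k)
          (U (k-1)) (V (k-1))
     \<le> Lext N Y lam mu beta act theta eta (W (k-1)) (WN (k-1)) (U (k-1)) (V (k-1)) (VN (k-1))
          (Lam (k-1)) (LamN (k-1)) (U (k-2)) (V (k-2))
       - C * ((\<Sum>i=1..N-1. (norm (W k i - W (k-1) i))^2) + (norm (WN k - WN (k-1)))^2
            + (\<Sum>i=1..N-1. (norm (U k i - U (k-1) i))^2)
            + (\<Sum>i=1..N-1. (norm (V k i - V (k-1) i))^2) + (norm (VN k - VN (k-1)))^2
            + (\<Sum>i=1..N-1. (norm (Lam k i - Lam (k-1) i))^2) + (norm (LamN k - LamN (k-1)))^2
            + (\<Sum>i=1..N-1. (norm (U (k-1) i - U (k-2) i))^2)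
            + (\<Sum>i=1..N-1. (norm (V (k-1) i - V (k-2) i))^2))"
proof -
  have omega_range: "\<And>k i. i \<in> {1..N-1} \<Longrightarrow> omin i < omega k i \<and> omega k i < omax i"
    using A2 by (meson le_less_trans)
  have norm_X_le: "norm X \<le> Vmax 0" using Vmax0 by simp
  interpret admm3s N X Y lam mu psi0 psi1 psi2 beta act Vmax heps eps omega W WN U V Lam VN LamN
      a omin omax theta eta
    by unfold_locales
      (fact a_def[THEN meta_eq_to_obj_eq] omin_def[THEN meta_eq_to_obj_eq] omax_def[THEN meta_eq_to_obj_eq]
        theta_def[THEN meta_eq_to_obj_eq] eta_def[THEN meta_eq_to_obj_eq] N3 lam_pos mu_pos
        sigma_an[rule_format] sigma_bd0[rule_format] sigma_bd1[rule_format] sigma_bd2[rule_format]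
        V0[rule_format] updW[rule_format] updWN[rule_format] updU[rule_format] updV[rule_format] updVlast[rule_format]
        updVN[rule_format] updLam[rule_format] updLamN[rule_format] A1[rule_format] A1N
        heps_rng[rule_format, THEN conjunct1] eps_rng[rule_format] A3[rule_format] omega_range norm_X_le)+
  have "k - 1 - 1 = k - 2" for k :: nat by simp
  with Lext_sufficient_descent show ?thesis
    unfolding Lext_iter_def increment_def dW_def dWN_def dU_def dV_def dVN_def dLam_def dLamN_def
    by simp
qed

end
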